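(* Let $g$ be a bounded generalized spatial sign, $1\le m<d$, and fix a dataset $S=(x_1,\dots,x_n)\in(\mathbb{R}^d)^n$. Then \[ \mathrm{bp}(\mathcal{V}_m^g;S)\ge\frac{\hat\phi_{g,m}-\hat\phi_{g,m+1}}{8\|g\|_\infty^2}, \] where $\hat\phi_{g,i}$ is the $i$-th largest eigenvalue of $\widehat K_g(S)$.
   Context: A bounded generalized spatial sign is $g(t)=\xi(\|t\|_2)t/\|t\|_2$ with $\xi:(0,\infty)\to(0,\infty)$ and $\|g\|_\infty:=\sup_t\|g(t)\|_2<\infty$. For a dataset $S=(x_1,\dots,x_n)$, $\widehat K_g(S)=\frac{2}{n(n-1)}\sum_{i<j}g((x_j-x_i)/\sqrt2)g((x_j-x_i)/\sqrt2)^\top$, and $\mathcal{V}_m^g(S)$ is the column space of the $d\times m$ matrix of orthonormal eigenvectors of $\widehat K_g(S)$ for its $m$ largest eigenvalues, an element of the Grassmannian $\mathrm{Gr}(d,m)$. For a map $\mathcal{V}:(\mathbb{R}^d)^n\to\mathrm{Gr}(d,m)$, the breakdown point at $S$ is \[ \mathrm{bp}(\mathcal{V};S)=\min_{1\le r\le n}\Big\{\frac rn:\sup_{S_{r/n}}\Theta(\mathcal{V}(S_{r/n}),\mathcal{V}(S))=\frac\pi2\Big\}, \] where the supremum is over all datasets $S_{r/n}=(x_1,\dots,x_{n-r},y_1,\dots,y_r)$ with arbitrary $y_1,\dots,y_r\in\mathbb{R}^d$, and $\Theta(\mathrm{col}(V_1),\mathrm{col}(V_2))=\arccos\varrho_m$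 is the largest principal angle, $\varrho_m$ being the smallest singular value of $V_1^\top V_2$ for orthonormal bases $V_1,V_2$. *)

theory Defs
  imports "Jordan_Normal_Form.Char_Poly" "HOL-Computational_Algebra.Polynomial"
begin

definition vnorm :: "real vec \<Rightarrow> real" where
  "vnorm v = sqrt (v \<bullet> v)"

text \<open>For the symmetric matrices considered here all eigenvalues are real and there are
 exactly dim many of them.\<close>
definition eigs_desc :: "real mat \<Rightarrow> real list" where
  "eigs_desc A = (let p = char_poly A in
     rev (sort (concat (map (\<lambda>x. replicate (order x p) x)
                          (sorted_list_of_set {x. poly p x = 0})))))"

definition eig_nth :: "real mat \<Rightarrow> nat \<Rightarrow> real" where
  "eig_nth A i = eigs_desc A ! (i - 1)"

definition top_eigvec_matrix :: "nat \<Rightarrow> real mat \<Rightarrow> real mat \<Rightarrow> bool" where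
  "top_eigvec_matrix m A V \<longleftrightarrow>
     V \<in> carrier_mat (dim_row A) m \<and>
     transpose_mat V * V = 1\<^sub>m m \<and>
     (\<forall>j<m. A *\<^sub>v col V j = eig_nth A (j + 1) \<cdot>\<^sub>v col V j)"

definition smallest_sv :: "real mat \<Rightarrow> real" where
  "smallest_sv M = sqrt (eig_nth (transpose_mat M * M) (dim_col M))"

text \<open>Largest principal angle between col(V1) and col(V2), V1, V2 orthonormal bases.\<close>
definition Theta :: "real mat \<Rightarrow> real mat \<Rightarrow> real" where
  "Theta V1 V2 = arccos (smallest_sv (transpose_mat V1 * V2))"

definition gss :: "(real \<Rightarrow> real) \<Rightarrow> real vec \<Rightarrow> real vec" where
  "gss xi t = (if vnorm t = 0 then 0\<^sub>v (dim_vec t) else (xi (vnorm t) / vnorm t) \<cdot>\<^sub>v t)"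

definition gss_sup_norm :: "nat \<Rightarrow> (real \<Rightarrow> real) \<Rightarrow> real" where
  "gss_sup_norm d xi = (SUP t\<in>carrier_vec d. vnorm (gss xi t))"

definition K_hat :: "nat \<Rightarrow> (real \<Rightarrow> real) \<Rightarrow> real vec list \<Rightarrow> real mat" where
  "K_hat d xi S = (let n = length S;
      u = (\<lambda>i j. gss xi ((1 / sqrt 2) \<cdot>\<^sub>v (S ! j - S ! i))) in
      mat d d (\<lambda>(a, b). 2 / (real n * (real n - 1)) *
        (\<Sum>i<n. \<Sum>j\<in>{i<..<n}. u i j $ a * u i j $ b)))"

definition contaminated :: "nat \<Rightarrow> real vec list \<Rightarrow> nat \<Rightarrow> real vec list set" where
  "contaminated d S r = {take (length S - r) S @ ys | ys.
      length ys = r \<and> (\<forall>y\<in>set ys. y \<in> carrier_vec d)}"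

text \<open>Breakdown point of a subspace-valued map V (represented by orthonormal basis
 matrices) at S; if no r breaks down, the convention is bp = 1.\<close>
definition bp :: "nat \<Rightarrow> (real vec list \<Rightarrow> real mat) \<Rightarrow> real vec list \<Rightarrow> real" where
  "bp d V S = (let n = length S;
      R = {r \<in> {1..n}. (SUP S'\<in>contaminated d S r. Theta (V S') (V S)) = pi / 2} in
      if R = {} then 1 else real (Min R) / real n)"

end

(*
  Let K = K_hat(S) and K' = K_hat(S'), where S' replaces r of the n points of S. Every summand of
  K is the outer product of a vector of norm at most ||g||, and at most n r of the n (n - 1) / 2
  summands change, so the quadratic forms of K and K' differ by at most
  e = 2 r ||g||^2 / (n - 1) on unit vectors. By Weyl's inequality the m-th eigenvalue of K' is at
  least phi_m - e; comparing Rayleigh quotients on the top eigenspace of K' then shows that the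
  squared cosine of the largest principal angle between the two top eigenspaces is at least
  (phi_m - phi_(m+1) - 2 e) / (phi_1 - phi_(m+1)). If r / n < (phi_m - phi_(m+1)) / (8 ||g||^2),
  then 2 e < phi_m - phi_(m+1), so this bound is positive and does not depend on the contaminating
  points, and the angle stays away from pi / 2.
*)
theory Submission
  imports Defs "HOL-Combinatorics.List_Permutation"
begin

section \<open>Real vectors and matrices with orthonormal columns\<close>

lemma scalar_prod_self_nonneg: "0 \<le> v \<bullet> (v :: real vec)"
  using conjugate_square_ge_0_vec[of v] by simp

lemma scalar_prod_self_eq_0_iff: "(v :: real vec) \<in> carrier_vec n \<Longrightarrow> v \<bullet> v = 0 \<longleftrightarrow> v = 0\<^sub>v n"
  using conjugate_square_eq_0_vec[of v n] by simp

lemma scalar_prod_self_pos: "(v :: real vec) \<in> carrier_vec n \<Longrightarrow> v \<noteq> 0\<^sub>v n \<Longrightarrow> 0 < v \<bullet> v"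
  using conjugate_square_greater_0_vec[of v n] by simp

lemma scalar_prod_self_eq_sum_squares: "(x :: real vec) \<in> carrier_vec m \<Longrightarrow> x \<bullet> x = (\<Sum>j<m. (x $ j)\<^sup>2)"
  unfolding scalar_prod_def by (auto simp: atLeast0LessThan power2_eq_square)

lemma scalar_prod_mult_mat_vec:
  fixes A :: "'a :: comm_semiring_0 mat"
  assumes "A \<in> carrier_mat n m" "w \<in> carrier_vec n" "x \<in> carrier_vec m"
  shows "w \<bullet> (A *\<^sub>v x) = (\<Sum>j<m. (w \<bullet> col A j) * x $ j)"
proof -
  have "w \<bullet> (A *\<^sub>v x) = (\<Sum>i<n. w $ i * (\<Sum>j<m. A $$ (i, j) * x $ j))"
    using assms unfolding scalar_prod_def mult_mat_vec_def row_def
    by (auto simp: atLeast0LessThan intro!: sum.cong)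
  also have "\<dots> = (\<Sum>j<m. (\<Sum>i<n. w $ i * A $$ (i, j)) * x $ j)"
    by (simp add: sum_distrib_left sum_distrib_right mult.assoc sum.swap[of _ "{..<m}"])
  also have "\<dots> = (\<Sum>j<m. (w \<bullet> col A j) * x $ j)"
    using assms unfolding scalar_prod_def col_def
    by (auto simp: atLeast0LessThan intro!: sum.cong)
  finally show ?thesis .
qed

lemma symmetric_mat_scalar_prod_swap:
  fixes A :: "'a :: comm_ring mat"
  assumes "A \<in> carrier_mat n n" "A\<^sup>T = A" "u \<in> carrier_vec n" "v \<in> carrier_vec n"
  shows "u \<bullet> (A *\<^sub>v v) = (A *\<^sub>v u) \<bullet> v"
  using transpose_vec_mult_scalar[OF assms(1,4,3)] assms(2) by simp

lemma cauchy_schwarz_scalar_prod: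
  fixes u x :: "real vec"
  assumes u: "u \<in> carrier_vec d" and x: "x \<in> carrier_vec d"
  shows "(u \<bullet> x)\<^sup>2 \<le> (u \<bullet> u) * (x \<bullet> x)"
proof (cases "u = 0\<^sub>v d")
  case True
  then show ?thesis using x by simp
next
  case False
  then have uu: "0 < u \<bullet> u" using scalar_prod_self_pos[OF u] by simp
  define t where "t = (u \<bullet> x) / (u \<bullet> u)"
  have "0 \<le> (x - t \<cdot>\<^sub>v u) \<bullet> (x - t \<cdot>\<^sub>v u)" by (rule scalar_prod_self_nonneg)
  also have "\<dots> = x \<bullet> x - 2 * t * (u \<bullet> x) + t * t * (u \<bullet> u)"
    using u x by (simp add: minus_scalar_prod_distrib[of _ d] scalar_prod_minus_distrib[of _ d]
        comm_scalar_prod[of x d u] algebra_simps)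
  also have "\<dots> = x \<bullet> x - (u \<bullet> x)\<^sup>2 / (u \<bullet> u)"
    unfolding t_def using uu by (simp add: field_simps power2_eq_square)
  finally show ?thesis using uu by (simp add: field_simps)
qed

lemma normalize_nonzero_vec:
  fixes x :: "real vec"
  assumes x: "x \<in> carrier_vec n" "x \<noteq> 0\<^sub>v n"
  defines "q \<equiv> (1 / sqrt (x \<bullet> x)) \<cdot>\<^sub>v x"
  shows "q \<in> carrier_vec n" "q \<bullet> q = 1" "\<And>u. u \<in> carrier_vec n \<Longrightarrow> u \<bullet> x = 0 \<Longrightarrow> u \<bullet> q = 0"
  using x scalar_prod_self_pos[OF x] unfolding q_def by (auto simp: field_simps)

lemma zero_row_imp_kernel_nonzero:
  fixes B :: "real mat"
  assumes B: "B \<in> carrier_mat n n" and k: "k < n" and zero: "\<And>j. j < n \<Longrightarrow> B $$ (k, j) = 0"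
  shows "\<exists>y. y \<in> carrier_vec n \<and> y \<noteq> 0\<^sub>v n \<and> B *\<^sub>v y = 0\<^sub>v n"
proof -
  have BT: "B\<^sup>T \<in> carrier_mat n n" using B by simp
  have "B\<^sup>T *\<^sub>v unit_vec n k = 0\<^sub>v n"
    using B k zero by (intro eq_vecI) (auto simp: scalar_prod_right_unit)
  then have "det B\<^sup>T = 0"
    using det_0_iff_vec_prod_zero[OF BT] unit_vec_nonzero[OF k] unit_vec_carrier by blast
  then have "det B = 0" using det_transpose[OF B] by simp
  then show ?thesis using det_0_iff_vec_prod_zero[OF B] by auto
qed

lemma orthonormal_cols_scalar_prod:
  fixes V :: "real mat"
  assumes V: "V \<in> carrier_mat d m" "V\<^sup>T * V = 1\<^sub>m m" and jk: "j < m" "k < m"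
  shows "col V j \<bullet> col V k = (if j = k then 1 else 0)"
proof -
  have "col V j \<bullet> col V k = (V\<^sup>T * V) $$ (j, k)" using V(1) jk by (auto simp: row_transpose)
  also have "\<dots> = (if j = k then 1 else 0)" using V(2) jk by simp
  finally show ?thesis .
qed

lemma orthonormal_cols_coord:
  fixes V :: "real mat"
  assumes V: "V \<in> carrier_mat d m" "V\<^sup>T * V = 1\<^sub>m m" and x: "x \<in> carrier_vec m" and j: "j < m"
  shows "col V j \<bullet> (V *\<^sub>v x) = x $ j"
proof -
  have "col V j \<bullet> (V *\<^sub>v x) = (V\<^sup>T *\<^sub>v (V *\<^sub>v x)) $ j" using V j x by (auto simp: row_transpose)
  also have "V\<^sup>T *\<^sub>v (V *\<^sub>v x) = x" using V x by (simp flip: assoc_mult_mat_vec[of _ m d _ m])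
  finally show ?thesis .
qed

lemma orthonormal_cols_isometry:
  fixes V :: "real mat"
  assumes V: "V \<in> carrier_mat d m" "V\<^sup>T * V = 1\<^sub>m m" and x: "x \<in> carrier_vec m"
  shows "(V *\<^sub>v x) \<bullet> (V *\<^sub>v x) = x \<bullet> x"
proof -
  have "(V *\<^sub>v x) \<bullet> (V *\<^sub>v x) = x \<bullet> (V\<^sup>T *\<^sub>v (V *\<^sub>v x))"
    using transpose_vec_mult_scalar[of V d m x "V *\<^sub>v x"] V x
      comm_scalar_prod[of "V\<^sup>T *\<^sub>v (V *\<^sub>v x)" m x] by simp
  also have "V\<^sup>T *\<^sub>v (V *\<^sub>v x) = x" using V x by (simp flip: assoc_mult_mat_vec[of _ m d _ m])
  finally show ?thesis .
qed

lemma orthonormal_cols_bessel: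
  fixes V :: "real mat"
  assumes V: "V \<in> carrier_mat d m" "V\<^sup>T * V = 1\<^sub>m m" and u: "u \<in> carrier_vec d"
  shows "(V\<^sup>T *\<^sub>v u) \<bullet> (V\<^sup>T *\<^sub>v u) \<le> u \<bullet> u"
proof -
  define t where "t = V\<^sup>T *\<^sub>v u"
  define s where "s = V *\<^sub>v t"
  have t: "t \<in> carrier_vec m" and s: "s \<in> carrier_vec d" unfolding t_def s_def using V u by auto
  have us: "u \<bullet> s = t \<bullet> t"
    using transpose_vec_mult_scalar[of V d m t u] V u t unfolding s_def t_def by simp
  have ss: "s \<bullet> s = t \<bullet> t" unfolding s_def using orthonormal_cols_isometry[OF V t] .
  have "0 \<le> (u - s) \<bullet> (u - s)" by (rule scalar_prod_self_nonneg)
  also have "\<dots> = u \<bullet> u - 2 * (u \<bullet> s) + s \<bullet> s"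
    using u s by (simp add: minus_scalar_prod_distrib[of _ d] scalar_prod_minus_distrib[of _ d]
        comm_scalar_prod[of s d u])
  finally show ?thesis using us ss unfolding t_def by simp
qed

section \<open>Orthonormal lists of vectors\<close>

definition orthonormal :: "nat \<Rightarrow> real vec list \<Rightarrow> bool" where
  "orthonormal n vs \<longleftrightarrow> set vs \<subseteq> carrier_vec n \<and>
     (\<forall>i<length vs. \<forall>j<length vs. vs ! i \<bullet> vs ! j = (if i = j then 1 else 0))"

lemma orthonormal_carrier: "orthonormal n vs \<Longrightarrow> i < length vs \<Longrightarrow> vs ! i \<in> carrier_vec n"
  unfolding orthonormal_def by auto

lemma orthonormal_scalar_prod:
  "orthonormal n vs \<Longrightarrow> i < length vs \<Longrightarrow> j < length vs \<Longrightarrow> vs ! i \<bullet> vs ! j = (if i = j then 1 else 0)"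
  unfolding orthonormal_def by auto

lemma orthonormal_mat_of_cols:
  assumes vs: "orthonormal n vs"
  shows "mat_of_cols n vs \<in> carrier_mat n (length vs)"
    "(mat_of_cols n vs)\<^sup>T * mat_of_cols n vs = 1\<^sub>m (length vs)"
    "\<And>j. j < length vs \<Longrightarrow> col (mat_of_cols n vs) j = vs ! j"
proof -
  show cols: "\<And>j. j < length vs \<Longrightarrow> col (mat_of_cols n vs) j = vs ! j"
    using orthonormal_carrier[OF vs] by (simp add: col_mat_of_cols)
  show "mat_of_cols n vs \<in> carrier_mat n (length vs)" by simp
  then show "(mat_of_cols n vs)\<^sup>T * mat_of_cols n vs = 1\<^sub>m (length vs)"
    using cols orthonormal_scalar_prod[OF vs] by (intro eq_matI) (auto simp: row_transpose)
qed

lemma orthonormal_basis_expansion: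
  assumes ps: "orthonormal n ps" "length ps = n" and x: "x \<in> carrier_vec n" and y: "y \<in> carrier_vec n"
  shows "x \<bullet> y = (\<Sum>i<n. (ps ! i \<bullet> x) * (ps ! i \<bullet> y))"
proof -
  define P where "P = mat_of_cols n ps"
  note P = orthonormal_mat_of_cols[OF ps(1), folded P_def, unfolded ps(2)]
  have "P * P\<^sup>T = 1\<^sub>m n" using mat_mult_left_right_inverse[of "P\<^sup>T" n P] P by auto
  then have "x \<bullet> y = x \<bullet> (P *\<^sub>v (P\<^sup>T *\<^sub>v y))" using P y by (simp flip: assoc_mult_mat_vec[of _ n n _ n])
  also have "\<dots> = (P\<^sup>T *\<^sub>v x) \<bullet> (P\<^sup>T *\<^sub>v y)"
    using transpose_vec_mult_scalar[of P n n "P\<^sup>T *\<^sub>v y" x] P x y by simp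
  also have "\<dots> = (\<Sum>i<n. (ps ! i \<bullet> x) * (ps ! i \<bullet> y))"
    using P x y unfolding scalar_prod_def[of "P\<^sup>T *\<^sub>v x"]
    by (auto simp: atLeast0LessThan row_transpose intro!: sum.cong)
  finally show ?thesis .
qed

lemma orthonormal_basis_norm:
  "orthonormal n ps \<Longrightarrow> length ps = n \<Longrightarrow> x \<in> carrier_vec n \<Longrightarrow> x \<bullet> x = (\<Sum>i<n. (ps ! i \<bullet> x)\<^sup>2)"
  using orthonormal_basis_expansion[of n ps x x] by (simp add: power2_eq_square)

lemma orthonormal_basis_orthogonal_imp_zero:
  assumes "orthonormal n ps" "length ps = n" "x \<in> carrier_vec n" "\<And>i. i < n \<Longrightarrow> ps ! i \<bullet> x = 0"
  shows "x = 0\<^sub>v n"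
  using orthonormal_basis_norm[OF assms(1-3)] assms(4) scalar_prod_self_eq_0_iff[OF assms(3)] by simp

lemma orthonormal_basis_eqI:
  assumes ps: "orthonormal n ps" "length ps = n" and uv: "u \<in> carrier_vec n" "v \<in> carrier_vec n"
    and coord: "\<And>i. i < n \<Longrightarrow> ps ! i \<bullet> u = ps ! i \<bullet> v"
  shows "u = v"
proof -
  have "u - v = 0\<^sub>v n"
    using uv coord orthonormal_carrier[OF ps(1)] ps(2)
    by (intro orthonormal_basis_orthogonal_imp_zero[OF ps]) (auto simp: scalar_prod_minus_distrib[of _ n])
  then have "\<And>i. i < n \<Longrightarrow> u $ i - v $ i = 0" using uv by (metis carrier_vecD index_minus_vec(1) index_zero_vec(1))
  then show ?thesis using uv by (intro eq_vecI) auto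
qed

lemma quadratic_form_eigenbasis:
  fixes A :: "real mat"
  assumes ps: "orthonormal n ps" "length ps = n" and A: "A \<in> carrier_mat n n" "A\<^sup>T = A"
    and ev: "\<And>i. i < n \<Longrightarrow> A *\<^sub>v ps ! i = es ! i \<cdot>\<^sub>v ps ! i" and x: "x \<in> carrier_vec n"
  shows "x \<bullet> (A *\<^sub>v x) = (\<Sum>i<n. es ! i * (ps ! i \<bullet> x)\<^sup>2)"
proof -
  have "x \<bullet> (A *\<^sub>v x) = (\<Sum>i<n. (ps ! i \<bullet> x) * (ps ! i \<bullet> (A *\<^sub>v x)))"
    using orthonormal_basis_expansion[OF ps x] A x by simp
  also have "\<dots> = (\<Sum>i<n. es ! i * (ps ! i \<bullet> x)\<^sup>2)"
  proof (rule sum.cong)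
    fix i assume "i \<in> {..<n}"
    then have i: "i < n" and p: "ps ! i \<in> carrier_vec n" using orthonormal_carrier[OF ps(1)] ps(2) by auto
    have "ps ! i \<bullet> (A *\<^sub>v x) = es ! i * (ps ! i \<bullet> x)"
      using symmetric_mat_scalar_prod_swap[OF A p x] ev[OF i] p x by simp
    then show "(ps ! i \<bullet> x) * (ps ! i \<bullet> (A *\<^sub>v x)) = es ! i * (ps ! i \<bullet> x)\<^sup>2"
      by (simp add: power2_eq_square)
  qed simp
  finally show ?thesis .
qed

lemma exists_unit_vec_orthogonal:
  assumes ps: "orthonormal n ps" and k: "length ps < n"
  shows "\<exists>q. q \<in> carrier_vec n \<and> q \<bullet> q = 1 \<and> (\<forall>i<length ps. ps ! i \<bullet> q = 0)"
proof -
  define B where "B = mat n n (\<lambda>(i, j). if i < length ps then ps ! i $ j else (0 :: real))"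
  have B: "B \<in> carrier_mat n n" unfolding B_def by simp
  have "\<exists>v. v \<in> carrier_vec n \<and> v \<noteq> 0\<^sub>v n \<and> B *\<^sub>v v = 0\<^sub>v n"
    by (rule zero_row_imp_kernel_nonzero[OF B, of "n - 1"]) (use k in \<open>auto simp: B_def\<close>)
  then obtain v where v: "v \<in> carrier_vec n" "v \<noteq> 0\<^sub>v n" "B *\<^sub>v v = 0\<^sub>v n" by blast
  have "ps ! i \<bullet> v = 0" if i: "i < length ps" for i
  proof -
    have "row B i = ps ! i" using i k orthonormal_carrier[OF ps i] unfolding B_def by (auto intro!: eq_vecI)
    then have "ps ! i \<bullet> v = (B *\<^sub>v v) $ i" using i k B by simp
    then show ?thesis using v i k by simp
  qed
  then show ?thesis
    using normalize_nonzero_vec[OF v(1,2)] orthonormal_carrier[OF ps] by blast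
qed

lemma orthonormal_snoc:
  assumes ps: "orthonormal n ps" and q: "q \<in> carrier_vec n" "q \<bullet> q = 1"
    and orth: "\<And>i. i < length ps \<Longrightarrow> ps ! i \<bullet> q = 0"
  shows "orthonormal n (ps @ [q])"
  unfolding orthonormal_def
proof (intro conjI allI impI)
  show "set (ps @ [q]) \<subseteq> carrier_vec n" using ps q unfolding orthonormal_def by auto
  fix i j assume "i < length (ps @ [q])" "j < length (ps @ [q])"
  then consider "i < length ps" "j < length ps" | "i < length ps" "j = length ps"
    | "i = length ps" "j < length ps" | "i = length ps" "j = length ps"
    by fastforce
  then show "(ps @ [q]) ! i \<bullet> (ps @ [q]) ! j = (if i = j then 1 else 0)"
  proof cases
    case 3
    then show ?thesis using orth comm_scalar_prod[OF orthonormal_carrier[OF ps] q(1)]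
      by (simp add: nth_append)
  qed (use ps q orth in \<open>auto simp: nth_append orthonormal_scalar_prod\<close>)
qed

lemma orthonormal_extend_to_basis:
  assumes "orthonormal n ps" "length ps \<le> n"
  shows "\<exists>ws. orthonormal n (ps @ ws) \<and> length (ps @ ws) = n"
  using assms
proof (induction "n - length ps" arbitrary: ps)
  case 0
  then show ?case by (intro exI[of _ "[]"]) auto
next
  case (Suc k)
  then obtain q where q: "q \<in> carrier_vec n" "q \<bullet> q = 1" "\<forall>i<length ps. ps ! i \<bullet> q = 0"
    using exists_unit_vec_orthogonal by fastforce
  then have "orthonormal n (ps @ [q])" using orthonormal_snoc[OF Suc(3)] by simp
  then obtain ws where "orthonormal n ((ps @ [q]) @ ws) \<and> length ((ps @ [q]) @ ws) = n"
    using Suc(1)[of "ps @ [q]"] Suc(2,4) by fastforce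
  then show ?case by (intro exI[of _ "q # ws"]) auto
qed

lemma orthonormal_append:
  assumes "orthonormal n (ps @ ws)"
  shows "orthonormal n ps" "orthonormal n ws" "\<And>i j. i < length ps \<Longrightarrow> j < length ws \<Longrightarrow> ps ! i \<bullet> ws ! j = 0"
proof -
  have carrier: "set ps \<subseteq> carrier_vec n" "set ws \<subseteq> carrier_vec n"
    using assms unfolding orthonormal_def by auto
  have dot: "\<And>i j. i < length (ps @ ws) \<Longrightarrow> j < length (ps @ ws) \<Longrightarrow>
      (ps @ ws) ! i \<bullet> (ps @ ws) ! j = (if i = j then 1 else 0)"
    using assms unfolding orthonormal_def by blast
  show "orthonormal n ps" unfolding orthonormal_def
  proof (intro conjI allI impI carrier)
    fix i j assume "i < length ps" "j < length ps"
    then show "ps ! i \<bullet> ps ! j = (if i = j then 1 else 0)" using dot[of i j] by (simp add: nth_append)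
  qed
  show "orthonormal n ws" unfolding orthonormal_def
  proof (intro conjI allI impI carrier)
    fix i j assume "i < length ws" "j < length ws"
    then show "ws ! i \<bullet> ws ! j = (if i = j then 1 else 0)"
      using dot[of "length ps + i" "length ps + j"] by (simp add: nth_append)
  qed
  fix i j assume "i < length ps" "j < length ws"
  then show "ps ! i \<bullet> ws ! j = 0" using dot[of i "length ps + j"] by (simp add: nth_append)
qed

section \<open>Spectral theorem for real symmetric matrices\<close>

lemma eigenvalue_of_real_symmetric_is_real:
  fixes C :: "real mat" and la :: complex
  assumes C: "C \<in> carrier_mat m m" "C\<^sup>T = C"
    and v: "v \<in> carrier_vec m" "v \<noteq> 0\<^sub>v m" "of_real_hom.mat_hom C *\<^sub>v v = la \<cdot>\<^sub>v v"
  shows "la \<in> \<real>"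
proof -
  define s where "s = (\<Sum>i<m. cnj (v $ i) * (of_real_hom.mat_hom C *\<^sub>v v) $ i)"
  define N where "N = (\<Sum>i<m. (cmod (v $ i))\<^sup>2)"
  have "s = la * (\<Sum>i<m. cnj (v $ i) * v $ i)"
    unfolding s_def using v by (auto simp: sum_distrib_left intro!: sum.cong)
  also have "(\<Sum>i<m. cnj (v $ i) * v $ i) = of_real N"
    unfolding N_def of_real_sum by (intro sum.cong refl) (metis complex_norm_square mult.commute)
  finally have s_eq: "s = la * of_real N" .
  have s_expand: "s = (\<Sum>i<m. \<Sum>j<m. cnj (v $ i) * of_real (C $$ (i, j)) * v $ j)"
    unfolding s_def using v(1) C(1)
    by (auto simp: scalar_prod_def sum_distrib_left atLeast0LessThan mult.assoc intro!: sum.cong)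
  have C_sym: "C $$ (j, i) = C $$ (i, j)" if "i < m" "j < m" for i j
    using that C by (metis index_transpose_mat(1) carrier_matD)
  have "cnj s = (\<Sum>i<m. \<Sum>j<m. v $ i * of_real (C $$ (i, j)) * cnj (v $ j))"
    unfolding s_expand by simp
  also have "\<dots> = (\<Sum>j<m. \<Sum>i<m. v $ i * of_real (C $$ (i, j)) * cnj (v $ j))"
    by (rule sum.swap)
  also have "\<dots> = s"
    unfolding s_expand by (auto intro!: sum.cong simp: C_sym mult.commute mult.left_commute)
  finally have s_real: "cnj s = s" .
  obtain i0 where i0: "i0 < m" "v $ i0 \<noteq> 0"
    using v(1,2) by (metis carrier_vecD eq_vecI index_zero_vec)
  have "0 < (cmod (v $ i0))\<^sup>2" using i0 by simp
  also have "\<dots> \<le> N" unfolding N_def using i0 by (intro member_le_sum) auto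
  finally have "la = s / of_real N" using s_eq by simp
  then have "cnj la = la" using s_real by simp
  then show ?thesis using Reals_cnj_iff by blast
qed

lemma real_symmetric_has_eigenvector:
  fixes C :: "real mat"
  assumes C: "C \<in> carrier_mat m m" "C\<^sup>T = C" and m: "0 < m"
  shows "\<exists>\<mu> v. v \<in> carrier_vec m \<and> v \<noteq> 0\<^sub>v m \<and> C *\<^sub>v v = \<mu> \<cdot>\<^sub>v v"
proof -
  define Cc :: "complex mat" where "Cc = of_real_hom.mat_hom C"
  have Cc: "Cc \<in> carrier_mat m m" unfolding Cc_def using C by simp
  obtain as where as: "char_poly Cc = (\<Prod>a\<leftarrow>as. [:- a, 1:])" "length as = m"
    using char_poly_factorized[OF Cc] by blast
  define la where "la = as ! 0"
  have "poly (char_poly Cc) la = 0" using as m unfolding la_def by (simp add: linear_poly_root)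
  then obtain v where v: "v \<in> carrier_vec m" "v \<noteq> 0\<^sub>v m" "Cc *\<^sub>v v = la \<cdot>\<^sub>v v"
    using eigenvalue_root_char_poly[OF Cc] Cc unfolding eigenvalue_def eigenvector_def by auto
  obtain r where r: "la = of_real r"
    using eigenvalue_of_real_symmetric_is_real[OF C v[unfolded Cc_def]] by (auto elim: Reals_cases)
  have "of_real (poly (char_poly C) r) = poly (char_poly Cc) (of_real r :: complex)"
    unfolding Cc_def of_real_hom.char_poly_hom[OF C(1)] by (simp add: of_real_hom.poly_map_poly)
  also have "\<dots> = 0" using \<open>poly (char_poly Cc) la = 0\<close> r by simp
  finally have "eigenvalue C r" using eigenvalue_root_char_poly[OF C(1)] by simp
  then show ?thesis unfolding eigenvalue_def eigenvector_def using C by auto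
qed

lemma compression_symmetric:
  fixes A W :: "'a :: comm_ring mat"
  assumes A: "A \<in> carrier_mat n n" "A\<^sup>T = A" and W: "W \<in> carrier_mat n l"
  shows "(W\<^sup>T * (A * W))\<^sup>T = W\<^sup>T * (A * W)"
proof -
  have "(W\<^sup>T * (A * W))\<^sup>T = (W\<^sup>T * A) * W"
    using A W by (simp add: transpose_mult[of _ l n _ l] transpose_mult[of _ n n _ l])
  then show ?thesis using A W by (simp add: assoc_mult_mat[of _ l n _ n _ l])
qed

lemma compression_eigenvector_coord:
  fixes A W :: "real mat"
  assumes A: "A \<in> carrier_mat n n" and W: "W \<in> carrier_mat n l" "W\<^sup>T * W = 1\<^sub>m l"
    and y: "y \<in> carrier_vec l" "(W\<^sup>T * (A * W)) *\<^sub>v y = \<mu> \<cdot>\<^sub>v y" and j: "j < l"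
  shows "col W j \<bullet> (A *\<^sub>v (W *\<^sub>v y)) = \<mu> * (col W j \<bullet> (W *\<^sub>v y))"
proof -
  have "col W j \<bullet> (A *\<^sub>v (W *\<^sub>v y)) = (W\<^sup>T *\<^sub>v (A *\<^sub>v (W *\<^sub>v y))) $ j"
    using W A y j by (simp add: row_transpose)
  also have "W\<^sup>T *\<^sub>v (A *\<^sub>v (W *\<^sub>v y)) = (W\<^sup>T * (A * W)) *\<^sub>v y"
    using assoc_mult_mat_vec[of "W\<^sup>T" l n "A * W" l y] assoc_mult_mat_vec[of A n n W l y] W A y(1) by simp
  also have "\<dots> = \<mu> \<cdot>\<^sub>v y" by (rule y(2))
  finally show ?thesis using orthonormal_cols_coord[OF W y(1) j] y(1) j by simp
qed

text \<open>The orthogonal complement of a set of eigenvectors of a symmetric matrix is invariant,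
  so the compression of the matrix to that complement yields a further eigenvector.\<close>

lemma eigenvector_orthogonal_to_eigenvectors:
  fixes A :: "real mat"
  assumes A: "A \<in> carrier_mat n n" "A\<^sup>T = A"
    and basis: "orthonormal n (ps @ ws)" "length (ps @ ws) = n" and ws: "ws \<noteq> []"
    and ev: "\<And>i. i < length ps \<Longrightarrow> A *\<^sub>v ps ! i = es ! i \<cdot>\<^sub>v ps ! i"
  shows "\<exists>\<mu> x. x \<in> carrier_vec n \<and> x \<noteq> 0\<^sub>v n \<and> A *\<^sub>v x = \<mu> \<cdot>\<^sub>v x \<and> (\<forall>i<length ps. ps ! i \<bullet> x = 0)"
proof -
  define k l where "k = length ps" and "l = length ws"
  define W where "W = mat_of_cols n ws"
  note orth = orthonormal_append[OF basis(1), folded k_def l_def]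
  note W = orthonormal_mat_of_cols[OF orth(2), folded W_def l_def]
  have p: "\<And>i. i < k \<Longrightarrow> ps ! i \<in> carrier_vec n" using orthonormal_carrier[OF orth(1)] k_def by simp
  have C: "W\<^sup>T * (A * W) \<in> carrier_mat l l" using A W by simp
  obtain \<mu> y where y: "y \<in> carrier_vec l" "y \<noteq> 0\<^sub>v l" "(W\<^sup>T * (A * W)) *\<^sub>v y = \<mu> \<cdot>\<^sub>v y"
    using real_symmetric_has_eigenvector[OF C compression_symmetric[OF A W(1)]] ws l_def by auto
  define x where "x = W *\<^sub>v y"
  have x: "x \<in> carrier_vec n" unfolding x_def using W y by simp
  have "0 < y \<bullet> y" using scalar_prod_self_pos[OF y(1,2)] .
  then have x0: "x \<noteq> 0\<^sub>v n" using orthonormal_cols_isometry[OF W(1,2) y(1)] unfolding x_def by auto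
  have px: "ps ! i \<bullet> x = 0" if i: "i < k" for i
    using scalar_prod_mult_mat_vec[OF W(1) p[OF i] y(1)] W(3) orth(3) i k_def l_def
    unfolding x_def by simp
  have "A *\<^sub>v x = \<mu> \<cdot>\<^sub>v x"
  proof (rule orthonormal_basis_eqI[OF basis])
    show "A *\<^sub>v x \<in> carrier_vec n" "\<mu> \<cdot>\<^sub>v x \<in> carrier_vec n" using A x by auto
    fix i assume i: "i < n"
    have "(ps @ ws) ! i \<in> carrier_vec n" using orthonormal_carrier[OF basis(1)] basis(2) i by simp
    moreover have "(ps @ ws) ! i \<bullet> (A *\<^sub>v x) = \<mu> * ((ps @ ws) ! i \<bullet> x)"
    proof (cases "i < k")
      case True
      have "ps ! i \<bullet> (A *\<^sub>v x) = es ! i * (ps ! i \<bullet> x)"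
        using symmetric_mat_scalar_prod_swap[OF A p[OF True] x] ev True p[OF True] x k_def by simp
      then show ?thesis using True px k_def by (simp add: nth_append)
    next
      case False
      then obtain j where j: "i = k + j" "j < l"
        using i basis(2) k_def l_def by (metis add_diff_inverse_nat length_append nat_add_left_cancel_less)
      then show ?thesis
        using compression_eigenvector_coord[OF A(1) W(1,2) y(1,3) j(2)] W(3) k_def
        unfolding x_def by (simp add: nth_append)
    qed
    ultimately show "(ps @ ws) ! i \<bullet> (A *\<^sub>v x) = (ps @ ws) ! i \<bullet> (\<mu> \<cdot>\<^sub>v x)" using x by simp
  qed
  then show ?thesis using x x0 px k_def by blast
qed

lemma orthonormal_eigenvectors_snoc:
  fixes A :: "real mat"
  assumes A: "A \<in> carrier_mat n n" "A\<^sup>T = A" and ps: "orthonormal n ps" "length ps < n"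
    and ev: "\<And>i. i < length ps \<Longrightarrow> A *\<^sub>v ps ! i = es ! i \<cdot>\<^sub>v ps ! i"
  shows "\<exists>\<mu> q. orthonormal n (ps @ [q]) \<and> A *\<^sub>v q = \<mu> \<cdot>\<^sub>v q"
proof -
  obtain ws where basis: "orthonormal n (ps @ ws)" "length (ps @ ws) = n"
    using orthonormal_extend_to_basis[OF ps(1)] ps(2) by fastforce
  then have "ws \<noteq> []" using ps(2) by auto
  then obtain \<mu> x where x: "x \<in> carrier_vec n" "x \<noteq> 0\<^sub>v n" "A *\<^sub>v x = \<mu> \<cdot>\<^sub>v x"
      "\<forall>i<length ps. ps ! i \<bullet> x = 0"
    using eigenvector_orthogonal_to_eigenvectors[OF A basis _ ev] by blast
  define q where "q = (1 / sqrt (x \<bullet> x)) \<cdot>\<^sub>v x"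
  note q = normalize_nonzero_vec[OF x(1,2), folded q_def]
  have "A *\<^sub>v q = \<mu> \<cdot>\<^sub>v q" unfolding q_def using A x by (simp add: mult_mat_vec[of _ n n] smult_smult_assoc mult.commute)
  moreover have "orthonormal n (ps @ [q])"
    using orthonormal_snoc[OF ps(1) q(1,2)] q(3) x(4) orthonormal_carrier[OF ps(1)] by simp
  ultimately show ?thesis by blast
qed

lemma orthonormal_eigenvectors_exist:
  fixes A :: "real mat"
  assumes A: "A \<in> carrier_mat n n" "A\<^sup>T = A" and k: "k \<le> n"
  shows "\<exists>ps es. orthonormal n ps \<and> length ps = k \<and> length es = k \<and>
           (\<forall>i<k. A *\<^sub>v ps ! i = es ! i \<cdot>\<^sub>v ps ! i)"
  using k
proof (induction k)
  case 0
  then show ?case by (intro exI[of _ "[]"]) (simp add: orthonormal_def)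
next
  case (Suc k)
  then obtain ps es where IH: "orthonormal n ps" "length ps = k" "length es = k"
    "\<forall>i<k. A *\<^sub>v ps ! i = es ! i \<cdot>\<^sub>v ps ! i" by auto
  have "length ps < n" using IH(2) Suc(2) by simp
  then obtain \<mu> q where q: "orthonormal n (ps @ [q])" "A *\<^sub>v q = \<mu> \<cdot>\<^sub>v q"
    using orthonormal_eigenvectors_snoc[OF A IH(1), of es] IH(2,4) by blast
  have "\<forall>i<Suc k. A *\<^sub>v (ps @ [q]) ! i = (es @ [\<mu>]) ! i \<cdot>\<^sub>v (ps @ [q]) ! i"
    using IH q by (auto simp: nth_append less_Suc_eq)
  then show ?case using q IH by (intro exI[of _ "ps @ [q]"] exI[of _ "es @ [\<mu>]"]) auto
qed

lemma order_prod_linear_factors: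
  fixes es :: "'a :: idom list"
  shows "order x (\<Prod>e\<leftarrow>es. [:- e, 1:]) = count (mset es) x"
proof (induction es)
  case Nil
  then show ?case by (simp add: order_0I)
next
  case (Cons a es)
  have "(\<Prod>e\<leftarrow>es. [:- e, 1:]) \<noteq> 0" by (auto simp: prod_list_zero_iff)
  then have "[:- a, 1:] * (\<Prod>e\<leftarrow>es. [:- e, 1:]) \<noteq> 0" by (metis mult_eq_0_iff one_neq_zero pCons_eq_0_iff)
  then have "order x ([:- a, 1:] * (\<Prod>e\<leftarrow>es. [:- e, 1:])) = order x [:- a, 1:] + order x (\<Prod>e\<leftarrow>es. [:- e, 1:])"
    by (rule order_mult)
  then show ?case using Cons by (simp add: order_linear')
qed

lemma eigs_desc_char_poly_linear_factors:
  assumes cp: "char_poly A = (\<Prod>e\<leftarrow>es. [:- e, 1:])"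
  shows "eigs_desc A = rev (sort es)"
proof -
  define p where "p = (\<Prod>e\<leftarrow>es. [:- e, 1:])"
  have roots: "{x. poly p x = 0} = set es" unfolding p_def by (auto simp: poly_prod_list_zero_iff)
  define L where "L = concat (map (\<lambda>x. replicate (order x p) x) (sorted_list_of_set (set es)))"
  have "mset L = (\<Sum>x\<in>set es. replicate_mset (count (mset es) x) x)"
    unfolding L_def mset_concat map_map p_def
    by (simp add: o_def order_prod_linear_factors sum_list_distinct_conv_sum_set)
  also have "\<dots> = mset es" by (rule multiset_eqI) (simp add: count_sum sum.delta)
  finally have "sort L = sort es" using properties_for_sort[of "sort es" L] by simp
  then show ?thesis unfolding eigs_desc_def Let_def cp roots[unfolded p_def] L_def[unfolded p_def] by simp
qed

lemma char_poly_orthonormal_eigenbasis: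
  fixes A :: "real mat"
  assumes A: "A \<in> carrier_mat n n" and ps: "orthonormal n ps" "length ps = n" and es: "length es = n"
    and ev: "\<And>i. i < n \<Longrightarrow> A *\<^sub>v ps ! i = es ! i \<cdot>\<^sub>v ps ! i"
  shows "char_poly A = (\<Prod>e\<leftarrow>es. [:- e, 1:])"
proof -
  define P where "P = mat_of_cols n ps"
  define D where "D = mat n n (\<lambda>(i, j). if i = j then es ! i else (0 :: real))"
  note P = orthonormal_mat_of_cols[OF ps(1), folded P_def, unfolded ps(2)]
  have D: "D \<in> carrier_mat n n" unfolding D_def by simp
  have PPt: "P * P\<^sup>T = 1\<^sub>m n" using mat_mult_left_right_inverse[of "P\<^sup>T" n P] P by auto
  have "A * P = P * D"
  proof (rule eq_matI)
    fix i j assume "i < dim_row (P * D)" "j < dim_col (P * D)"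
    then have ij: "i < n" "j < n" using P D by auto
    have pj: "ps ! j \<in> carrier_vec n" using orthonormal_carrier[OF ps(1)] ps(2) ij by simp
    have "(A * P) $$ (i, j) = (A *\<^sub>v col P j) $ i" using A P ij by simp
    also have "\<dots> = es ! j * P $$ (i, j)" using P ij ev[of j] pj index_col[of i P j] by simp
    also have "\<dots> = (\<Sum>l\<in>{0..<n}. P $$ (i, l) * D $$ (l, j))"
      using ij unfolding D_def by (simp add: if_distrib[of "(*) _"] sum.delta' cong: if_cong)
    also have "\<dots> = (P * D) $$ (i, j)" using P D ij by (simp add: scalar_prod_def)
    finally show "(A * P) $$ (i, j) = (P * D) $$ (i, j)" .
  qed (use A P D in auto)
  have "A = A * (P * P\<^sup>T)" using PPt A by simp
  also have "\<dots> = P * D * P\<^sup>T" using assoc_mult_mat[of A n n P n "P\<^sup>T" n] A P \<open>A * P = P * D\<close> by simp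
  finally have "similar_mat_wit A D P P\<^sup>T"
    unfolding similar_mat_wit_def Let_def using A P D PPt by auto
  then have "similar_mat A D" unfolding similar_mat_def by blast
  then have "char_poly A = char_poly D" by (rule char_poly_similar)
  also have "\<dots> = (\<Prod>a\<leftarrow>diag_mat D. [:- a, 1:])"
    by (rule char_poly_upper_triangular[OF D]) (simp add: upper_triangular_def D_def)
  also have "diag_mat D = es" unfolding diag_mat_def D_def using es by (auto intro: nth_equalityI)
  finally show ?thesis .
qed

lemma orthonormal_eigenbasis_permute:
  fixes A :: "real mat"
  assumes ps: "orthonormal n ps" "length ps = n" and es: "length es = n"
    and ev: "\<And>i. i < n \<Longrightarrow> A *\<^sub>v ps ! i = es ! i \<cdot>\<^sub>v ps ! i" and perm: "mset ls = mset es"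
  shows "\<exists>qs. orthonormal n qs \<and> length qs = n \<and> (\<forall>i<n. A *\<^sub>v qs ! i = ls ! i \<cdot>\<^sub>v qs ! i)"
proof -
  obtain f where f: "bij_betw f {..<n} {..<n}" "\<And>i. i < n \<Longrightarrow> ls ! i = es ! f i"
    using permutation_Ex_bij[OF perm] es mset_eq_length[OF perm] by auto
  have f_lt: "\<And>i. i < n \<Longrightarrow> f i < n" and f_inj: "\<And>i j. i < n \<Longrightarrow> j < n \<Longrightarrow> f i = f j \<longleftrightarrow> i = j"
    using f(1) unfolding bij_betw_def inj_on_def by auto
  define qs where "qs = map (\<lambda>i. ps ! f i) [0..<n]"
  have qs: "\<And>i. i < n \<Longrightarrow> qs ! i = ps ! f i" "length qs = n" unfolding qs_def by auto
  have "orthonormal n qs"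
    unfolding orthonormal_def
  proof (intro conjI allI impI)
    show "set qs \<subseteq> carrier_vec n" unfolding qs_def using f_lt orthonormal_carrier[OF ps(1)] ps(2) by auto
    fix i j assume "i < length qs" "j < length qs"
    then show "qs ! i \<bullet> qs ! j = (if i = j then 1 else 0)"
      using qs orthonormal_scalar_prod[OF ps(1), of "f i" "f j"] f_lt f_inj ps(2) by simp
  qed
  moreover have "\<forall>i<n. A *\<^sub>v qs ! i = ls ! i \<cdot>\<^sub>v qs ! i" using qs f(2) ev f_lt by auto
  ultimately show ?thesis using qs(2) by blast
qed

definition sorted_eigenbasis :: "nat \<Rightarrow> real mat \<Rightarrow> real vec list \<Rightarrow> real list \<Rightarrow> bool" where
  "sorted_eigenbasis n A ps ls \<longleftrightarrow> A \<in> carrier_mat n n \<and> A\<^sup>T = A \<and>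
     orthonormal n ps \<and> length ps = n \<and> length ls = n \<and>
     (\<forall>i<n. A *\<^sub>v ps ! i = ls ! i \<cdot>\<^sub>v ps ! i) \<and> (\<forall>i j. i \<le> j \<longrightarrow> j < n \<longrightarrow> ls ! j \<le> ls ! i)"

theorem symmetric_mat_sorted_eigenbasis:
  fixes A :: "real mat"
  assumes A: "A \<in> carrier_mat n n" "A\<^sup>T = A"
  shows "\<exists>ps. sorted_eigenbasis n A ps (eigs_desc A)"
proof -
  obtain ps es where ps: "orthonormal n ps" "length ps = n" and es: "length es = n"
    and ev: "\<forall>i<n. A *\<^sub>v ps ! i = es ! i \<cdot>\<^sub>v ps ! i"
    using orthonormal_eigenvectors_exist[OF A order_refl] by blast
  have ls: "eigs_desc A = rev (sort es)"
    using eigs_desc_char_poly_linear_factors char_poly_orthonormal_eigenbasis[OF A(1) ps es] ev by blast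
  have sorted: "eigs_desc A ! j \<le> eigs_desc A ! i" if "i \<le> j" "j < n" for i j
  proof -
    have "eigs_desc A ! j = sort es ! (n - Suc j)" "eigs_desc A ! i = sort es ! (n - Suc i)"
      using that es by (simp_all add: ls rev_nth)
    then show ?thesis using sorted_nth_mono[of "sort es" "n - Suc j" "n - Suc i"] that es by simp
  qed
  have "mset (eigs_desc A) = mset es" by (simp add: ls)
  then obtain qs where "orthonormal n qs" "length qs = n" "\<forall>i<n. A *\<^sub>v qs ! i = eigs_desc A ! i \<cdot>\<^sub>v qs ! i"
    using orthonormal_eigenbasis_permute[OF ps es ev[rule_format]] by blast
  moreover have "length (eigs_desc A) = n" by (simp add: ls es)
  ultimately show ?thesis using A sorted unfolding sorted_eigenbasis_def by blast
qed

lemma sorted_eigenbasisD: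
  assumes "sorted_eigenbasis n A ps ls"
  shows "A \<in> carrier_mat n n" "A\<^sup>T = A" "orthonormal n ps" "length ps = n" "length ls = n"
    "\<And>i. i < n \<Longrightarrow> A *\<^sub>v ps ! i = ls ! i \<cdot>\<^sub>v ps ! i"
    "\<And>i j. i \<le> j \<Longrightarrow> j < n \<Longrightarrow> ls ! j \<le> ls ! i"
  using assms unfolding sorted_eigenbasis_def by auto

lemma sorted_eigenbasis_quadratic_form:
  assumes "sorted_eigenbasis n A ps ls" "x \<in> carrier_vec n"
  shows "x \<bullet> (A *\<^sub>v x) = (\<Sum>i<n. ls ! i * (ps ! i \<bullet> x)\<^sup>2)"
  using sorted_eigenbasisD[OF assms(1)] by (intro quadratic_form_eigenbasis[OF _ _ _ _ _ assms(2)])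

lemma sorted_eigenbasis_eigenvalue:
  assumes es: "sorted_eigenbasis n A ps ls" and i: "i < n"
  shows "ls ! i = ps ! i \<bullet> (A *\<^sub>v ps ! i)"
proof -
  note es = sorted_eigenbasisD[OF es]
  have "ps ! i \<in> carrier_vec n" "ps ! i \<bullet> ps ! i = 1"
    using orthonormal_carrier[OF es(3)] orthonormal_scalar_prod[OF es(3)] es(4) i by auto
  then show ?thesis using es(6)[OF i] by simp
qed

lemma eig_nth_antimono:
  assumes A: "A \<in> carrier_mat n n" "A\<^sup>T = A" and ij: "1 \<le> i" "i \<le> j" "j \<le> n"
  shows "eig_nth A j \<le> eig_nth A i"
proof -
  obtain ps where "sorted_eigenbasis n A ps (eigs_desc A)" using symmetric_mat_sorted_eigenbasis[OF A] by blast
  then show ?thesis using sorted_eigenbasisD(7)[of n A ps _ "i - 1" "j - 1"] ij unfolding eig_nth_def by simp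
qed

section \<open>Eigenvalue and eigenspace perturbation\<close>

lemma symmetric_mat_eigenvectors_orthogonal:
  fixes A :: "real mat"
  assumes A: "A \<in> carrier_mat n n" "A\<^sup>T = A" and uv: "u \<in> carrier_vec n" "v \<in> carrier_vec n"
    and ev: "A *\<^sub>v u = a \<cdot>\<^sub>v u" "A *\<^sub>v v = b \<cdot>\<^sub>v v" and ab: "a \<noteq> b"
  shows "u \<bullet> v = 0"
proof -
  have "u \<bullet> (A *\<^sub>v v) = (A *\<^sub>v u) \<bullet> v" by (rule symmetric_mat_scalar_prod_swap[OF A uv(1,2)])
  then have "b * (u \<bullet> v) = a * (u \<bullet> v)" using ev uv by simp
  then show ?thesis using ab by simp
qed

lemma quadratic_form_top_eigvecs_lower:
  fixes A V :: "real mat"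
  assumes A: "A \<in> carrier_mat n n" "A\<^sup>T = A" and V: "V \<in> carrier_mat n m" "V\<^sup>T * V = 1\<^sub>m m" and m: "0 < m"
    and ev: "\<And>j. j < m \<Longrightarrow> A *\<^sub>v col V j = ls ! j \<cdot>\<^sub>v col V j"
    and mono: "\<And>j. j < m \<Longrightarrow> ls ! (m - 1) \<le> ls ! j" and x: "x \<in> carrier_vec m"
  shows "ls ! (m - 1) * (x \<bullet> x) \<le> (V *\<^sub>v x) \<bullet> (A *\<^sub>v (V *\<^sub>v x))"
proof -
  define w where "w = V *\<^sub>v x"
  have w: "w \<in> carrier_vec n" and Aw: "A *\<^sub>v w \<in> carrier_vec n" unfolding w_def using A V x by auto
  have cV: "\<And>j. j < m \<Longrightarrow> col V j \<in> carrier_vec n" using V by simp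
  have "ls ! (m - 1) * (x \<bullet> x) = (\<Sum>j<m. ls ! (m - 1) * (x $ j)\<^sup>2)"
    using scalar_prod_self_eq_sum_squares[OF x] by (simp add: sum_distrib_left)
  also have "\<dots> \<le> (\<Sum>j<m. ls ! j * (x $ j)\<^sup>2)" using mono by (intro sum_mono mult_right_mono) auto
  also have "\<dots> = (\<Sum>j<m. ((A *\<^sub>v w) \<bullet> col V j) * x $ j)"
  proof (rule sum.cong)
    fix j assume "j \<in> {..<m}"
    then have j: "j < m" by simp
    have "(A *\<^sub>v w) \<bullet> col V j = ls ! j * (w \<bullet> col V j)"
      using symmetric_mat_scalar_prod_swap[OF A w cV[OF j]] ev[OF j] w cV[OF j] by simp
    also have "w \<bullet> col V j = x $ j"
      using orthonormal_cols_coord[OF V x j] comm_scalar_prod[OF w cV[OF j]] unfolding w_def by simp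
    finally show "ls ! j * (x $ j)\<^sup>2 = ((A *\<^sub>v w) \<bullet> col V j) * x $ j" by (simp add: power2_eq_square)
  qed simp
  also have "\<dots> = (A *\<^sub>v w) \<bullet> w" unfolding w_def using scalar_prod_mult_mat_vec[OF V(1) _ x] Aw[unfolded w_def] by simp
  also have "\<dots> = w \<bullet> (A *\<^sub>v w)" using comm_scalar_prod[OF Aw w] .
  finally show ?thesis unfolding w_def .
qed

lemma quadratic_form_le_top_split:
  assumes es: "sorted_eigenbasis n A ps ls" and m: "m < n" and w: "w \<in> carrier_vec n"
  shows "w \<bullet> (A *\<^sub>v w) \<le> ls ! 0 * (\<Sum>i<m. (ps ! i \<bullet> w)\<^sup>2) + ls ! m * (w \<bullet> w - (\<Sum>i<m. (ps ! i \<bullet> w)\<^sup>2))"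
proof -
  note es' = sorted_eigenbasisD[OF es]
  have split: "(\<Sum>i<n. f i) = (\<Sum>i<m. f i) + (\<Sum>i\<in>{m..<n}. f i)" for f :: "nat \<Rightarrow> real"
    using sum.atLeastLessThan_concat[of 0 m n f] m by (simp add: atLeast0LessThan)
  have "w \<bullet> (A *\<^sub>v w) = (\<Sum>i<m. ls ! i * (ps ! i \<bullet> w)\<^sup>2) + (\<Sum>i\<in>{m..<n}. ls ! i * (ps ! i \<bullet> w)\<^sup>2)"
    using sorted_eigenbasis_quadratic_form[OF es w] split by simp
  also have "\<dots> \<le> (\<Sum>i<m. ls ! 0 * (ps ! i \<bullet> w)\<^sup>2) + (\<Sum>i\<in>{m..<n}. ls ! m * (ps ! i \<bullet> w)\<^sup>2)"
    using es'(7) m by (intro add_mono sum_mono mult_right_mono) auto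
  also have "\<dots> = ls ! 0 * (\<Sum>i<m. (ps ! i \<bullet> w)\<^sup>2) + ls ! m * (\<Sum>i\<in>{m..<n}. (ps ! i \<bullet> w)\<^sup>2)"
    by (simp add: sum_distrib_left)
  also have "(\<Sum>i\<in>{m..<n}. (ps ! i \<bullet> w)\<^sup>2) = w \<bullet> w - (\<Sum>i<m. (ps ! i \<bullet> w)\<^sup>2)"
    using orthonormal_basis_norm[OF es'(3,4) w] split by simp
  finally show ?thesis .
qed

lemma quadratic_form_ge_on_top_span:
  assumes es: "sorted_eigenbasis n A ps ls" and m: "0 < m" "m \<le> n" and z: "z \<in> carrier_vec n"
    and orth: "\<And>k. m \<le> k \<Longrightarrow> k < n \<Longrightarrow> ps ! k \<bullet> z = 0"
  shows "ls ! (m - 1) * (z \<bullet> z) \<le> z \<bullet> (A *\<^sub>v z)"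
proof -
  note es' = sorted_eigenbasisD[OF es]
  have "ls ! (m - 1) * (z \<bullet> z) = (\<Sum>k<n. ls ! (m - 1) * (ps ! k \<bullet> z)\<^sup>2)"
    using orthonormal_basis_norm[OF es'(3,4) z] by (simp add: sum_distrib_left)
  also have "\<dots> \<le> (\<Sum>k<n. ls ! k * (ps ! k \<bullet> z)\<^sup>2)"
  proof (rule sum_mono)
    fix k assume "k \<in> {..<n}"
    then show "ls ! (m - 1) * (ps ! k \<bullet> z)\<^sup>2 \<le> ls ! k * (ps ! k \<bullet> z)\<^sup>2"
      using es'(7)[of k "m - 1"] orth[of k] m by (cases "k < m") (auto intro: mult_right_mono)
  qed
  also have "\<dots> = z \<bullet> (A *\<^sub>v z)" using sorted_eigenbasis_quadratic_form[OF es z] by simp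
  finally show ?thesis .
qed

lemma quadratic_form_le_on_orthogonal:
  assumes es: "sorted_eigenbasis n A ps ls" and j: "j < n" and z: "z \<in> carrier_vec n"
    and orth: "\<And>i. i < j \<Longrightarrow> ps ! i \<bullet> z = 0"
  shows "z \<bullet> (A *\<^sub>v z) \<le> ls ! j * (z \<bullet> z)"
proof -
  note es' = sorted_eigenbasisD[OF es]
  have "z \<bullet> (A *\<^sub>v z) = (\<Sum>i<n. ls ! i * (ps ! i \<bullet> z)\<^sup>2)" using sorted_eigenbasis_quadratic_form[OF es z] .
  also have "\<dots> \<le> (\<Sum>i<n. ls ! j * (ps ! i \<bullet> z)\<^sup>2)"
  proof (rule sum_mono)
    fix i assume "i \<in> {..<n}"
    then show "ls ! i * (ps ! i \<bullet> z)\<^sup>2 \<le> ls ! j * (ps ! i \<bullet> z)\<^sup>2"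
      using es'(7)[of j i] orth[of i] by (cases "i < j") (auto intro: mult_right_mono)
  qed
  also have "\<dots> = ls ! j * (z \<bullet> z)" using orthonormal_basis_norm[OF es'(3,4) z] by (simp add: sum_distrib_left)
  finally show ?thesis .
qed

lemma exists_in_top_span_orthogonal:
  assumes ps: "orthonormal n ps" "length ps = n" and m: "0 < m" "m \<le> n"
    and qs: "\<And>i. i < m - 1 \<Longrightarrow> qs ! i \<in> carrier_vec n"
  shows "\<exists>z \<in> carrier_vec n. z \<noteq> 0\<^sub>v n \<and> (\<forall>k. m \<le> k \<longrightarrow> k < n \<longrightarrow> ps ! k \<bullet> z = 0) \<and>
           (\<forall>i<m - 1. qs ! i \<bullet> z = 0)"
proof -
  define P where "P = mat_of_cols n (take m ps)"
  have "orthonormal n (take m ps)" using orthonormal_append(1)[of n "take m ps" "drop m ps"] ps(1) by simp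
  moreover have "length (take m ps) = m" using ps(2) m by simp
  ultimately have P': "P \<in> carrier_mat n m" "P\<^sup>T * P = 1\<^sub>m m" and colP: "\<And>j. j < m \<Longrightarrow> col P j = ps ! j"
    using orthonormal_mat_of_cols[of n "take m ps", folded P_def] by auto
  have p: "\<And>k. k < n \<Longrightarrow> ps ! k \<in> carrier_vec n" using orthonormal_carrier[OF ps(1)] ps(2) by simp
  define B where "B = mat m m (\<lambda>(i, j). if i < m - 1 then qs ! i \<bullet> ps ! j else (0 :: real))"
  have B: "B \<in> carrier_mat m m" unfolding B_def by simp
  have "\<exists>y. y \<in> carrier_vec m \<and> y \<noteq> 0\<^sub>v m \<and> B *\<^sub>v y = 0\<^sub>v m"
    by (rule zero_row_imp_kernel_nonzero[OF B, of "m - 1"]) (use m in \<open>auto simp: B_def\<close>)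
  then obtain y where y: "y \<in> carrier_vec m" "y \<noteq> 0\<^sub>v m" "B *\<^sub>v y = 0\<^sub>v m" by blast
  define z where "z = P *\<^sub>v y"
  have z: "z \<in> carrier_vec n" unfolding z_def using P' y by simp
  have "0 < y \<bullet> y" using scalar_prod_self_pos[OF y(1,2)] .
  then have "z \<noteq> 0\<^sub>v n" using orthonormal_cols_isometry[OF P' y(1)] unfolding z_def by auto
  moreover have "ps ! k \<bullet> z = 0" if k: "m \<le> k" "k < n" for k
  proof -
    have "ps ! k \<bullet> z = (\<Sum>j<m. (ps ! k \<bullet> ps ! j) * y $ j)"
      unfolding z_def using scalar_prod_mult_mat_vec[OF P'(1) p[OF k(2)] y(1)] colP by simp
    also have "\<dots> = 0" using orthonormal_scalar_prod[OF ps(1)] ps(2) k by (intro sum.neutral) auto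
    finally show ?thesis .
  qed
  moreover have "qs ! i \<bullet> z = 0" if i: "i < m - 1" for i
  proof -
    have "qs ! i \<bullet> z = (\<Sum>j<m. (qs ! i \<bullet> ps ! j) * y $ j)"
      unfolding z_def using scalar_prod_mult_mat_vec[OF P'(1) qs[OF i] y(1)] colP by simp
    also have "\<dots> = (\<Sum>j<m. B $$ (i, j) * y $ j)" using i by (intro sum.cong) (auto simp: B_def)
    also have "\<dots> = (B *\<^sub>v y) $ i" using B y(1) i by (simp add: scalar_prod_def atLeast0LessThan)
    finally show ?thesis using y(3) i by simp
  qed
  ultimately show ?thesis using z by blast
qed

text \<open>Weyl's inequality, by the Courant--Fischer argument: test both quadratic forms on a
  nonzero vector in the span of the top \<open>m\<close> eigenvectors of \<open>A\<close> that is orthogonal to the top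
  \<open>m - 1\<close> eigenvectors of \<open>A'\<close>.\<close>

lemma eigenvalue_perturbation_lower:
  assumes es: "sorted_eigenbasis n A ps ls" and es': "sorted_eigenbasis n A' qs ls'"
    and pert: "\<And>x. x \<in> carrier_vec n \<Longrightarrow> \<bar>x \<bullet> (A' *\<^sub>v x) - x \<bullet> (A *\<^sub>v x)\<bar> \<le> e * (x \<bullet> x)"
    and m: "0 < m" "m \<le> n"
  shows "ls ! (m - 1) - e \<le> ls' ! (m - 1)"
proof -
  note ps = sorted_eigenbasisD[OF es] and qs = sorted_eigenbasisD[OF es']
  obtain z where z: "z \<in> carrier_vec n" "z \<noteq> 0\<^sub>v n" "\<forall>k. m \<le> k \<longrightarrow> k < n \<longrightarrow> ps ! k \<bullet> z = 0"
      "\<forall>i<m - 1. qs ! i \<bullet> z = 0"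
    using exists_in_top_span_orthogonal[OF ps(3,4) m, of qs] orthonormal_carrier[OF qs(3)] qs(4) m
    by auto
  have "ls ! (m - 1) * (z \<bullet> z) - e * (z \<bullet> z) \<le> z \<bullet> (A *\<^sub>v z) - e * (z \<bullet> z)"
    using quadratic_form_ge_on_top_span[OF es m z(1)] z(3) by simp
  also have "\<dots> \<le> z \<bullet> (A' *\<^sub>v z)" using pert[OF z(1)] by linarith
  also have "\<dots> \<le> ls' ! (m - 1) * (z \<bullet> z)"
    using quadratic_form_le_on_orthogonal[OF es' _ z(1)] z(4) m by simp
  finally have "(ls ! (m - 1) - e) * (z \<bullet> z) \<le> ls' ! (m - 1) * (z \<bullet> z)" by (simp add: left_diff_distrib)
  then show ?thesis using scalar_prod_self_pos[OF z(1,2)] by simp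
qed

text \<open>By \<open>span\<close>, the columns of \<open>V\<close> and the first \<open>m\<close> vectors of \<open>ps\<close> are orthonormal bases of
  the same space, so both measure the length of the projection of \<open>w\<close> onto it.\<close>

lemma orthonormal_cols_projection_norm:
  fixes V :: "real mat"
  assumes ps: "orthonormal n ps" "length ps = n" and V: "V \<in> carrier_mat n m" "V\<^sup>T * V = 1\<^sub>m m"
    and m: "m \<le> n" and span: "\<And>i j. m \<le> i \<Longrightarrow> i < n \<Longrightarrow> j < m \<Longrightarrow> ps ! i \<bullet> col V j = 0"
    and w: "w \<in> carrier_vec n"
  shows "(V\<^sup>T *\<^sub>v w) \<bullet> (V\<^sup>T *\<^sub>v w) = (\<Sum>i<m. (ps ! i \<bullet> w)\<^sup>2)"
proof -
  have cV: "\<And>j. j < m \<Longrightarrow> col V j \<in> carrier_vec n" using V by simp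
  have truncate: "(\<Sum>i<n. (ps ! i \<bullet> col V j) * f i) = (\<Sum>i<m. (ps ! i \<bullet> col V j) * f i)"
    if j: "j < m" for j and f :: "nat \<Rightarrow> real"
    using span[OF _ _ j] m by (intro sum.mono_neutral_right) auto
  define C where "C = mat m m (\<lambda>(i, j). ps ! i \<bullet> col V j)"
  define a where "a = vec m (\<lambda>i. ps ! i \<bullet> w)"
  have C: "C \<in> carrier_mat m m" and a: "a \<in> carrier_vec m" unfolding C_def a_def by simp_all
  have "V\<^sup>T *\<^sub>v w = C\<^sup>T *\<^sub>v a"
  proof (rule eq_vecI)
    fix j assume "j < dim_vec (C\<^sup>T *\<^sub>v a)"
    then have j: "j < m" using C by simp
    have "(V\<^sup>T *\<^sub>v w) $ j = (\<Sum>i<n. (ps ! i \<bullet> col V j) * (ps ! i \<bullet> w))"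
      using orthonormal_basis_expansion[OF ps cV[OF j] w] V j by (simp add: row_transpose)
    also have "\<dots> = (\<Sum>i<m. C $$ (i, j) * a $ i)" using truncate[OF j] j unfolding C_def a_def by simp
    also have "\<dots> = (C\<^sup>T *\<^sub>v a) $ j" using C a j by (simp add: scalar_prod_def atLeast0LessThan row_transpose)
    finally show "(V\<^sup>T *\<^sub>v w) $ j = (C\<^sup>T *\<^sub>v a) $ j" .
  qed (use V C in simp)
  moreover have "C\<^sup>T * C = 1\<^sub>m m"
  proof (rule eq_matI)
    fix j k assume "j < dim_row (1\<^sub>m m)" "k < dim_col (1\<^sub>m m)"
    then have jk: "j < m" "k < m" by simp_all
    have "(C\<^sup>T * C) $$ (j, k) = (\<Sum>i<m. (ps ! i \<bullet> col V j) * (ps ! i \<bullet> col V k))"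
      using C jk unfolding C_def by (simp add: scalar_prod_def atLeast0LessThan row_transpose)
    also have "\<dots> = col V j \<bullet> col V k"
      using orthonormal_basis_expansion[OF ps cV[OF jk(1)] cV[OF jk(2)]] truncate[OF jk(1)] by simp
    also have "\<dots> = 1\<^sub>m m $$ (j, k)" using orthonormal_cols_scalar_prod[OF V jk] jk by simp
    finally show "(C\<^sup>T * C) $$ (j, k) = 1\<^sub>m m $$ (j, k)" .
  qed (use C in simp_all)
  then have "C * C\<^sup>T = 1\<^sub>m m" using mat_mult_left_right_inverse[of "C\<^sup>T" m C] C by simp
  then have "(C\<^sup>T *\<^sub>v a) \<bullet> (C\<^sup>T *\<^sub>v a) = a \<bullet> a" using orthonormal_cols_isometry[of "C\<^sup>T" m m a] C a by simp
  ultimately show ?thesis using scalar_prod_self_eq_sum_squares[OF a] unfolding a_def by simp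
qed

lemma top_eigvecs_projection_norm:
  fixes V :: "real mat"
  assumes es: "sorted_eigenbasis n A ps ls" and V: "V \<in> carrier_mat n m" "V\<^sup>T * V = 1\<^sub>m m"
    and m: "0 < m" "m < n" and gap: "ls ! m < ls ! (m - 1)"
    and ev: "\<And>j. j < m \<Longrightarrow> A *\<^sub>v col V j = ls ! j \<cdot>\<^sub>v col V j" and w: "w \<in> carrier_vec n"
  shows "(V\<^sup>T *\<^sub>v w) \<bullet> (V\<^sup>T *\<^sub>v w) = (\<Sum>i<m. (ps ! i \<bullet> w)\<^sup>2)"
proof (rule orthonormal_cols_projection_norm[OF _ _ V _ _ w])
  note es' = sorted_eigenbasisD[OF es]
  fix i j assume ij: "m \<le> i" "i < n" "j < m"
  have "ls ! i \<noteq> ls ! j" using es'(7)[of m i] es'(7)[of j "m - 1"] ij m gap by fastforce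
  then show "ps ! i \<bullet> col V j = 0"
    using symmetric_mat_eigenvectors_orthogonal[OF es'(1,2) _ _ es'(6) ev] orthonormal_carrier[OF es'(3)]
      es'(4) V(1) ij by simp
qed (use es m in \<open>simp_all add: sorted_eigenbasis_def\<close>)

text \<open>Let \<open>w = V' x\<close>. Its Rayleigh quotient for \<open>A'\<close> is at least \<open>ls' ! (m - 1) \<ge> ls ! (m - 1) - e\<close>
  (Weyl), so for \<open>A\<close> it is at least \<open>ls ! (m - 1) - 2 e\<close>; since the part of \<open>w\<close> outside the top
  eigenspace of \<open>A\<close> contributes at most \<open>ls ! m\<close>, the part inside must be large.\<close>

lemma top_eigvecs_perturbation_lower:
  fixes V V' :: "real mat"
  assumes es: "sorted_eigenbasis n A ps ls" and es': "sorted_eigenbasis n A' qs ls'"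
    and pert: "\<And>x. x \<in> carrier_vec n \<Longrightarrow> \<bar>x \<bullet> (A' *\<^sub>v x) - x \<bullet> (A *\<^sub>v x)\<bar> \<le> e * (x \<bullet> x)"
    and e: "0 \<le> e" and m: "0 < m" "m < n"
    and V: "V \<in> carrier_mat n m" "V\<^sup>T * V = 1\<^sub>m m" "\<And>j. j < m \<Longrightarrow> A *\<^sub>v col V j = ls ! j \<cdot>\<^sub>v col V j"
    and V': "V' \<in> carrier_mat n m" "V'\<^sup>T * V' = 1\<^sub>m m" "\<And>j. j < m \<Longrightarrow> A' *\<^sub>v col V' j = ls' ! j \<cdot>\<^sub>v col V' j"
    and gap: "2 * e < ls ! (m - 1) - ls ! m" and x: "x \<in> carrier_vec m"
  shows "(ls ! (m - 1) - ls ! m - 2 * e) / (ls ! 0 - ls ! m) * (x \<bullet> x)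
           \<le> (V\<^sup>T *\<^sub>v (V' *\<^sub>v x)) \<bullet> (V\<^sup>T *\<^sub>v (V' *\<^sub>v x))"
proof -
  note ps = sorted_eigenbasisD[OF es] and qs = sorted_eigenbasisD[OF es']
  define w where "w = V' *\<^sub>v x"
  define a where "a = (V\<^sup>T *\<^sub>v w) \<bullet> (V\<^sup>T *\<^sub>v w)"
  have w: "w \<in> carrier_vec n" unfolding w_def using V' x by simp
  have ww: "w \<bullet> w = x \<bullet> x" unfolding w_def using orthonormal_cols_isometry[OF V'(1,2) x] .
  have a: "a = (\<Sum>i<m. (ps ! i \<bullet> w)\<^sup>2)"
    unfolding a_def using top_eigvecs_projection_norm[OF es V(1,2) m _ V(3) w] gap e by simp
  have weyl: "ls ! (m - 1) - e \<le> ls' ! (m - 1)"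
    using eigenvalue_perturbation_lower[OF es es' pert] m by simp
  have "ls' ! (m - 1) * (x \<bullet> x) \<le> w \<bullet> (A' *\<^sub>v w)"
    unfolding w_def using quadratic_form_top_eigvecs_lower[OF qs(1,2) V'(1,2) m(1) V'(3) _ x] qs(7) m by simp
  also have "\<dots> \<le> w \<bullet> (A *\<^sub>v w) + e * (x \<bullet> x)" using abs_le_D1[OF pert[OF w]] ww by simp
  also have "\<dots> \<le> ls ! 0 * a + ls ! m * (x \<bullet> x - a) + e * (x \<bullet> x)"
    using quadratic_form_le_top_split[OF es m(2) w] a ww by simp
  finally have "(ls ! (m - 1) - e) * (x \<bullet> x) \<le> ls ! 0 * a + ls ! m * (x \<bullet> x - a) + e * (x \<bullet> x)"
    using mult_right_mono[OF weyl scalar_prod_self_nonneg[of x]] by linarith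
  then have "(ls ! (m - 1) - ls ! m - 2 * e) * (x \<bullet> x) \<le> (ls ! 0 - ls ! m) * a"
    by (simp add: algebra_simps)
  moreover have "ls ! (m - 1) \<le> ls ! 0" using ps(7)[of 0 "m - 1"] m by simp
  then have "0 < ls ! 0 - ls ! m" using gap e by simp
  ultimately show ?thesis unfolding a_def w_def by (simp add: field_simps)
qed

text \<open>The lower bound is on \<open>M\<^sup>T\<close>, i.e. on \<open>M * M\<^sup>T\<close>; it transfers to \<open>M\<^sup>T * M\<close> because a zero
  eigenvalue there would make \<open>M\<close>, hence \<open>M\<^sup>T\<close>, singular.\<close>

lemma gram_smallest_eigenvalue_bounds:
  fixes M :: "real mat"
  assumes M: "M \<in> carrier_mat m m" and m: "0 < m" and c: "0 < c"
    and lower: "\<And>x. x \<in> carrier_vec m \<Longrightarrow> c * (x \<bullet> x) \<le> (M\<^sup>T *\<^sub>v x) \<bullet> (M\<^sup>T *\<^sub>v x)"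
    and upper: "\<And>y. y \<in> carrier_vec m \<Longrightarrow> (M *\<^sub>v y) \<bullet> (M *\<^sub>v y) \<le> y \<bullet> y"
  shows "c \<le> eigs_desc (M\<^sup>T * M) ! (m - 1)" "eigs_desc (M\<^sup>T * M) ! (m - 1) \<le> 1"
proof -
  define \<mu> where "\<mu> = eigs_desc (M\<^sup>T * M) ! (m - 1)"
  have MM: "M\<^sup>T * M \<in> carrier_mat m m" "(M\<^sup>T * M)\<^sup>T = M\<^sup>T * M" using M by (simp_all add: transpose_mult[of _ m m])
  obtain rs where "sorted_eigenbasis m (M\<^sup>T * M) rs (eigs_desc (M\<^sup>T * M))"
    using symmetric_mat_sorted_eigenbasis[OF MM] by blast
  note rs = sorted_eigenbasisD[OF this]
  define z where "z = rs ! (m - 1)"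
  have z: "z \<in> carrier_vec m" "z \<bullet> z = 1"
    using orthonormal_carrier[OF rs(3)] orthonormal_scalar_prod[OF rs(3)] rs(4) m unfolding z_def by auto
  have "(M\<^sup>T * M) *\<^sub>v z = \<mu> \<cdot>\<^sub>v z" using rs(6)[of "m - 1"] m unfolding z_def \<mu>_def by simp
  then have Mz_ev: "M\<^sup>T *\<^sub>v (M *\<^sub>v z) = \<mu> \<cdot>\<^sub>v z" using assoc_mult_mat_vec[of "M\<^sup>T" m m M m z] M z(1) by simp
  have Mz: "M *\<^sub>v z \<in> carrier_vec m" using M z by simp
  have \<mu>: "\<mu> = (M *\<^sub>v z) \<bullet> (M *\<^sub>v z)"
    using transpose_vec_mult_scalar[OF M z(1) Mz] Mz_ev z comm_scalar_prod[OF z(1), of "\<mu> \<cdot>\<^sub>v z"] by simp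
  show "\<mu> \<le> 1" using upper[OF z(1)] z \<mu> by simp
  have "\<mu> \<noteq> 0"
  proof
    assume "\<mu> = 0"
    then have "M *\<^sub>v z = 0\<^sub>v m" using \<mu> scalar_prod_self_eq_0_iff[OF Mz] by simp
    moreover have "z \<noteq> 0\<^sub>v m" using z(2) by auto
    ultimately have "det M\<^sup>T = 0" using det_0_iff_vec_prod_zero[OF M] z(1) det_transpose[OF M] by auto
    then obtain x where x: "x \<in> carrier_vec m" "x \<noteq> 0\<^sub>v m" "M\<^sup>T *\<^sub>v x = 0\<^sub>v m"
      using det_0_iff_vec_prod_zero[of "M\<^sup>T" m] M by auto
    have "0 < c * (x \<bullet> x)" using c scalar_prod_self_pos[OF x(1,2)] by simp
    then show False using lower[OF x(1)] x(3) by simp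
  qed
  moreover have "c * \<mu> \<le> \<mu> * \<mu>" using lower[OF Mz] Mz_ev z \<mu> by simp
  moreover have "0 \<le> \<mu>" using \<mu> scalar_prod_self_nonneg by simp
  ultimately show "c \<le> \<mu>" by (simp add: mult_le_cancel_right)
qed

lemma Theta_le_arccos:
  fixes V V' :: "real mat"
  assumes V: "V \<in> carrier_mat d m" "V\<^sup>T * V = 1\<^sub>m m" and V': "V' \<in> carrier_mat d m" "V'\<^sup>T * V' = 1\<^sub>m m"
    and m: "0 < m" and c: "0 < c"
    and bound: "\<And>x. x \<in> carrier_vec m \<Longrightarrow> c * (x \<bullet> x) \<le> (V\<^sup>T *\<^sub>v (V' *\<^sub>v x)) \<bullet> (V\<^sup>T *\<^sub>v (V' *\<^sub>v x))"
  shows "Theta V' V \<le> arccos (sqrt (min 1 c))"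
proof -
  define M where "M = V'\<^sup>T * V"
  have M: "M \<in> carrier_mat m m" unfolding M_def using V V' by simp
  have "M\<^sup>T *\<^sub>v x = V\<^sup>T *\<^sub>v (V' *\<^sub>v x)" if "x \<in> carrier_vec m" for x
    unfolding M_def using V V' that by (simp add: transpose_mult[of _ m d _ m] assoc_mult_mat_vec[of _ m d _ m])
  then have lower: "\<And>x. x \<in> carrier_vec m \<Longrightarrow> c * (x \<bullet> x) \<le> (M\<^sup>T *\<^sub>v x) \<bullet> (M\<^sup>T *\<^sub>v x)" using bound by simp
  have upper: "(M *\<^sub>v y) \<bullet> (M *\<^sub>v y) \<le> y \<bullet> y" if y: "y \<in> carrier_vec m" for y
  proof -
    have "M *\<^sub>v y = V'\<^sup>T *\<^sub>v (V *\<^sub>v y)" unfolding M_def using V V' y by (simp add: assoc_mult_mat_vec[of _ m d _ m])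
    then show ?thesis
      using orthonormal_cols_bessel[OF V', of "V *\<^sub>v y"] orthonormal_cols_isometry[OF V y] V y by simp
  qed
  define \<mu> where "\<mu> = eigs_desc (M\<^sup>T * M) ! (m - 1)"
  note \<mu> = gram_smallest_eigenvalue_bounds[OF M m c lower upper, folded \<mu>_def]
  have "Theta V' V = arccos (sqrt \<mu>)"
    unfolding Theta_def smallest_sv_def eig_nth_def \<mu>_def M_def[symmetric] using M by simp
  also have "\<dots> \<le> arccos (sqrt (min 1 c))"
  proof (rule arccos_le_arccos)
    show "-1 \<le> sqrt (min 1 c)" using c by (simp add: order_trans[of _ 0])
  qed (use \<mu> in auto)
  finally show ?thesis .
qed

theorem Theta_top_eigvecs_perturbation:
  fixes K K' V V' :: "real mat"
  assumes K: "K \<in> carrier_mat d d" "K\<^sup>T = K" and K': "K' \<in> carrier_mat d d" "K'\<^sup>T = K'"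
    and pert: "\<And>x. x \<in> carrier_vec d \<Longrightarrow> \<bar>x \<bullet> (K' *\<^sub>v x) - x \<bullet> (K *\<^sub>v x)\<bar> \<le> e * (x \<bullet> x)"
    and e: "0 \<le> e" and m: "0 < m" "m < d"
    and V: "top_eigvec_matrix m K V" and V': "top_eigvec_matrix m K' V'"
    and gap: "2 * e < eig_nth K m - eig_nth K (m + 1)"
  shows "Theta V' V \<le> arccos (sqrt (min 1 ((eig_nth K m - eig_nth K (m + 1) - 2 * e)
                                           / (eig_nth K 1 - eig_nth K (m + 1)))))"
proof -
  obtain ps where es: "sorted_eigenbasis d K ps (eigs_desc K)"
    using symmetric_mat_sorted_eigenbasis[OF K] by blast
  obtain qs where es': "sorted_eigenbasis d K' qs (eigs_desc K')"
    using symmetric_mat_sorted_eigenbasis[OF K'] by blast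
  define ls ls' where "ls = eigs_desc K" and "ls' = eigs_desc K'"
  have nth: "eig_nth K (j + 1) = ls ! j" "eig_nth K' (j + 1) = ls' ! j" for j
    unfolding eig_nth_def ls_def ls'_def by simp_all
  have nth_m: "eig_nth K m = ls ! (m - 1)" using nth(1)[of "m - 1"] m by simp
  have V: "V \<in> carrier_mat d m" "V\<^sup>T * V = 1\<^sub>m m" "\<And>j. j < m \<Longrightarrow> K *\<^sub>v col V j = ls ! j \<cdot>\<^sub>v col V j"
    using V K(1) unfolding top_eigvec_matrix_def nth by auto
  have V': "V' \<in> carrier_mat d m" "V'\<^sup>T * V' = 1\<^sub>m m" "\<And>j. j < m \<Longrightarrow> K' *\<^sub>v col V' j = ls' ! j \<cdot>\<^sub>v col V' j"
    using V' K'(1) unfolding top_eigvec_matrix_def nth by auto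
  have gap': "2 * e < ls ! (m - 1) - ls ! m" using gap nth(1)[of m] nth_m by simp
  moreover have "ls ! (m - 1) \<le> ls ! 0" using sorted_eigenbasisD(7)[OF es, of 0 "m - 1"] m ls_def by simp
  ultimately have "0 < (ls ! (m - 1) - ls ! m - 2 * e) / (ls ! 0 - ls ! m)"
    using e by (intro divide_pos_pos) auto
  from Theta_le_arccos[OF V(1,2) V'(1,2) m(1) this
      top_eigvecs_perturbation_lower[OF es[folded ls_def] es'[folded ls'_def] pert e m V V' gap']]
  show ?thesis using nth(1)[of 0] nth(1)[of m] nth_m by simp
qed

section \<open>The spatial sign scatter matrix\<close>

lemma quadratic_form_sum_outer_products:
  fixes u :: "'p \<Rightarrow> real vec"
  assumes P: "finite P" and u: "\<And>p. p \<in> P \<Longrightarrow> u p \<in> carrier_vec d" and x: "x \<in> carrier_vec d"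
  shows "x \<bullet> (mat d d (\<lambda>(a, b). c * (\<Sum>p\<in>P. u p $ a * u p $ b)) *\<^sub>v x) = c * (\<Sum>p\<in>P. (u p \<bullet> x)\<^sup>2)"
proof -
  have "x \<bullet> (mat d d (\<lambda>(a, b). c * (\<Sum>p\<in>P. u p $ a * u p $ b)) *\<^sub>v x)
      = c * (\<Sum>a<d. \<Sum>b<d. \<Sum>p\<in>P. (u p $ a * x $ a) * (u p $ b * x $ b))"
    using x by (simp add: scalar_prod_def atLeast0LessThan sum_distrib_left sum_distrib_right mult_ac)
  also have "(\<Sum>a<d. \<Sum>b<d. \<Sum>p\<in>P. (u p $ a * x $ a) * (u p $ b * x $ b))
      = (\<Sum>p\<in>P. \<Sum>a<d. \<Sum>b<d. (u p $ a * x $ a) * (u p $ b * x $ b))"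
    by (subst sum.swap) (rule sum.cong[OF refl], rule sum.swap)
  also have "\<dots> = (\<Sum>p\<in>P. (u p \<bullet> x)\<^sup>2)"
    using u x by (intro sum.cong) (auto simp: scalar_prod_def atLeast0LessThan power2_eq_square sum_product)
  finally show ?thesis .
qed

definition index_pairs :: "nat \<Rightarrow> (nat \<times> nat) set" where
  "index_pairs n = Sigma {..<n} (\<lambda>i. {i<..<n})"

definition pair_weight :: "nat \<Rightarrow> real" where
  "pair_weight n = 2 / (real n * (real n - 1))"

definition pair_sign :: "(real \<Rightarrow> real) \<Rightarrow> real vec list \<Rightarrow> nat \<times> nat \<Rightarrow> real vec" where
  "pair_sign xi S p = gss xi ((1 / sqrt 2) \<cdot>\<^sub>v (S ! snd p - S ! fst p))"

lemma pair_weight_nonneg: "0 \<le> pair_weight n"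
  unfolding pair_weight_def by (cases n) auto

lemma pair_sign_carrier:
  assumes "\<forall>x\<in>set S. x \<in> carrier_vec d" "length S = n" "p \<in> index_pairs n"
  shows "pair_sign xi S p \<in> carrier_vec d"
proof -
  have "S ! fst p \<in> carrier_vec d" "S ! snd p \<in> carrier_vec d" using assms unfolding index_pairs_def by auto
  then show ?thesis unfolding pair_sign_def gss_def by auto
qed

lemma K_hat_eq_pair_sum:
  "K_hat d xi S = mat d d (\<lambda>(a, b). pair_weight (length S) *
     (\<Sum>p\<in>index_pairs (length S). pair_sign xi S p $ a * pair_sign xi S p $ b))"
  unfolding K_hat_def Let_def pair_weight_def pair_sign_def index_pairs_def
  by (subst sum.Sigma) (auto simp: split_beta)

lemma K_hat_carrier: "K_hat d xi S \<in> carrier_mat d d"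
  unfolding K_hat_def Let_def by simp

lemma K_hat_symmetric: "(K_hat d xi S)\<^sup>T = K_hat d xi S"
  unfolding K_hat_def Let_def by (intro eq_matI) (auto simp: mult.commute)

lemma K_hat_quadratic_form:
  assumes S: "\<forall>x\<in>set S. x \<in> carrier_vec d" "length S = n" and x: "x \<in> carrier_vec d"
  shows "x \<bullet> (K_hat d xi S *\<^sub>v x) = pair_weight n * (\<Sum>p\<in>index_pairs n. (pair_sign xi S p \<bullet> x)\<^sup>2)"
  unfolding K_hat_eq_pair_sum S(2)
  by (rule quadratic_form_sum_outer_products[OF _ pair_sign_carrier[OF S] x]) (simp add: index_pairs_def)

lemma vnorm_nonneg: "0 \<le> vnorm t"
  unfolding vnorm_def using scalar_prod_self_nonneg[of t] by simp

lemma vnorm_smult: "vnorm (c \<cdot>\<^sub>v t) = \<bar>c\<bar> * vnorm t"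
  unfolding vnorm_def by (simp add: real_sqrt_mult flip: power2_eq_square mult.assoc)

lemma vnorm_gss: "vnorm t \<noteq> 0 \<Longrightarrow> vnorm (gss xi t) = \<bar>xi (vnorm t)\<bar>"
  unfolding gss_def using vnorm_nonneg[of t] by (simp add: vnorm_smult abs_div)

lemma gss_sup_norm_bounds:
  assumes xi_pos: "\<And>r. r > 0 \<Longrightarrow> xi r > 0" and xi_bdd: "bdd_above (xi ` {0<..})" and d: "0 < d"
  shows "\<And>t. t \<in> carrier_vec d \<Longrightarrow> vnorm (gss xi t) \<le> gss_sup_norm d xi" "0 < gss_sup_norm d xi"
proof -
  obtain B where B: "\<And>r. r > 0 \<Longrightarrow> xi r \<le> B" using xi_bdd unfolding bdd_above_def by auto
  have "vnorm (gss xi t) \<le> max 0 B" for t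
  proof (cases "vnorm t = 0")
    case True
    then show ?thesis unfolding gss_def vnorm_def by simp
  next
    case False
    then have "0 < vnorm t" using vnorm_nonneg[of t] by simp
    then show ?thesis using vnorm_gss[OF False] xi_pos B by fastforce
  qed
  then have bdd: "bdd_above ((\<lambda>t. vnorm (gss xi t)) ` carrier_vec d)" by (meson bdd_aboveI2)
  show upper: "\<And>t. t \<in> carrier_vec d \<Longrightarrow> vnorm (gss xi t) \<le> gss_sup_norm d xi"
    unfolding gss_sup_norm_def by (rule cSUP_upper[OF _ bdd])
  have "vnorm (unit_vec d 0 :: real vec) = 1" unfolding vnorm_def using d by simp
  then have "xi 1 = vnorm (gss xi (unit_vec d 0))" using vnorm_gss[of "unit_vec d 0" xi] xi_pos[of 1] by simp
  then show "0 < gss_sup_norm d xi" using upper[of "unit_vec d 0"] xi_pos[of 1] by simp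
qed

lemma scalar_prod_square_le_vnorm:
  assumes u: "u \<in> carrier_vec d" "vnorm u \<le> G" and x: "x \<in> carrier_vec d"
  shows "(u \<bullet> x)\<^sup>2 \<le> G\<^sup>2 * (x \<bullet> x)"
proof -
  have "(vnorm u)\<^sup>2 \<le> G\<^sup>2" using u(2) vnorm_nonneg[of u] by (intro power_mono) auto
  then have "u \<bullet> u \<le> G\<^sup>2" unfolding vnorm_def using scalar_prod_self_nonneg[of u] by simp
  then have "(u \<bullet> u) * (x \<bullet> x) \<le> G\<^sup>2 * (x \<bullet> x)" using scalar_prod_self_nonneg[of x] by (rule mult_right_mono)
  then show ?thesis using cauchy_schwarz_scalar_prod[OF u(1) x] by linarith
qed

lemma pair_sign_scalar_prod_le:
  assumes S: "\<forall>x\<in>set S. x \<in> carrier_vec d" "length S = n" and p: "p \<in> index_pairs n"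
    and G: "\<And>t. t \<in> carrier_vec d \<Longrightarrow> vnorm (gss xi t) \<le> G" and x: "x \<in> carrier_vec d"
  shows "(pair_sign xi S p \<bullet> x)\<^sup>2 \<le> G\<^sup>2 * (x \<bullet> x)"
proof -
  have "S ! fst p \<in> carrier_vec d" "S ! snd p \<in> carrier_vec d" using S p unfolding index_pairs_def by auto
  then have "vnorm (pair_sign xi S p) \<le> G" unfolding pair_sign_def by (intro G) simp
  then show ?thesis using scalar_prod_square_le_vnorm pair_sign_carrier[OF S p] x by blast
qed

lemma K_hat_quadratic_form_bounds:
  assumes S: "\<forall>x\<in>set S. x \<in> carrier_vec d" "length S = n"
    and G: "\<And>t. t \<in> carrier_vec d \<Longrightarrow> vnorm (gss xi t) \<le> G" and x: "x \<in> carrier_vec d"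
  shows "0 \<le> x \<bullet> (K_hat d xi S *\<^sub>v x)" "x \<bullet> (K_hat d xi S *\<^sub>v x) \<le> 4 * G\<^sup>2 * (x \<bullet> x)"
proof -
  note q = K_hat_quadratic_form[OF S x]
  show "0 \<le> x \<bullet> (K_hat d xi S *\<^sub>v x)" unfolding q using pair_weight_nonneg by (simp add: sum_nonneg)
  have "card (index_pairs n) \<le> card ({..<n} \<times> {..<n})"
    unfolding index_pairs_def by (intro card_mono) auto
  then have card: "real (card (index_pairs n)) \<le> real n * real n"
    by (metis card_cartesian_product card_lessThan of_nat_le_iff of_nat_mult)
  have weight: "pair_weight n * (real n * real n) \<le> 4"
  proof (cases "n < 2")
    case True
    then show ?thesis unfolding pair_weight_def by (cases n) auto
  next
    case False
    then show ?thesis unfolding pair_weight_def by (simp add: field_simps)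
  qed
  have "(\<Sum>p\<in>index_pairs n. (pair_sign xi S p \<bullet> x)\<^sup>2) \<le> real (card (index_pairs n)) * (G\<^sup>2 * (x \<bullet> x))"
    using pair_sign_scalar_prod_le[OF S _ G x] by (intro sum_bounded_above) auto
  also have "\<dots> \<le> real n * real n * (G\<^sup>2 * (x \<bullet> x))"
    using card scalar_prod_self_nonneg[of x] by (intro mult_right_mono) auto
  finally have "x \<bullet> (K_hat d xi S *\<^sub>v x) \<le> pair_weight n * (real n * real n) * (G\<^sup>2 * (x \<bullet> x))"
    unfolding q using pair_weight_nonneg by (simp add: mult_left_mono mult.assoc)
  also have "\<dots> \<le> 4 * (G\<^sup>2 * (x \<bullet> x))"
    using weight scalar_prod_self_nonneg[of x] by (intro mult_right_mono) auto
  finally show "x \<bullet> (K_hat d xi S *\<^sub>v x) \<le> 4 * G\<^sup>2 * (x \<bullet> x)" by simp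
qed

text \<open>Replacing the last \<open>r\<close> points changes only the summands of pairs involving one of them,
  at most \<open>n r\<close> pairs, each contributing at most \<open>G\<^sup>2 |x|\<^sup>2\<close>.\<close>

lemma K_hat_quadratic_form_perturbation:
  assumes S: "\<forall>x\<in>set S. x \<in> carrier_vec d" "length S = n"
    and S': "\<forall>x\<in>set S'. x \<in> carrier_vec d" "length S' = n"
    and same: "\<And>i. i < n - r \<Longrightarrow> S' ! i = S ! i" and n: "2 \<le> n"
    and G: "\<And>t. t \<in> carrier_vec d \<Longrightarrow> vnorm (gss xi t) \<le> G" and x: "x \<in> carrier_vec d"
  shows "\<bar>x \<bullet> (K_hat d xi S' *\<^sub>v x) - x \<bullet> (K_hat d xi S *\<^sub>v x)\<bar> \<le> 2 * real r * G\<^sup>2 / (real n - 1) * (x \<bullet> x)"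
proof -
  define f f' Q where "f = (\<lambda>p. (pair_sign xi S p \<bullet> x)\<^sup>2)" and "f' = (\<lambda>p. (pair_sign xi S' p \<bullet> x)\<^sup>2)"
    and "Q = G\<^sup>2 * (x \<bullet> x)"
  define changed where "changed = {p \<in> index_pairs n. n - r \<le> snd p}"
  have Q: "0 \<le> Q" unfolding Q_def using scalar_prod_self_nonneg[of x] by simp
  have fin: "finite (index_pairs n)" unfolding index_pairs_def by simp
  have summand: "\<bar>f' p - f p\<bar> \<le> (if p \<in> changed then Q else 0)" if p: "p \<in> index_pairs n" for p
  proof (cases "p \<in> changed")
    case True
    have "0 \<le> f p" "f p \<le> Q" "0 \<le> f' p" "f' p \<le> Q"
      unfolding f_def f'_def Q_def using pair_sign_scalar_prod_le[OF S p G x] pair_sign_scalar_prod_le[OF S' p G x] by auto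
    then show ?thesis using True by auto
  next
    case False
    then have "fst p < n - r" "snd p < n - r" using p unfolding changed_def index_pairs_def by auto
    then show ?thesis using False same unfolding f_def f'_def pair_sign_def by simp
  qed
  have "card changed \<le> card ({..<n} \<times> {n - r..<n})" unfolding changed_def index_pairs_def by (intro card_mono) auto
  also have "\<dots> \<le> n * r" by (simp add: card_cartesian_product) linarith
  finally have card: "real (card changed) \<le> real n * real r" by (metis of_nat_le_iff of_nat_mult)
  have "\<bar>\<Sum>p\<in>index_pairs n. f' p - f p\<bar> \<le> (\<Sum>p\<in>index_pairs n. if p \<in> changed then Q else 0)"
    using summand by (intro order_trans[OF sum_abs] sum_mono) auto
  also have "\<dots> = real (card changed) * Q" using fin unfolding changed_def by (simp add: sum.If_cases Int_def)
  also have "\<dots> \<le> real n * real r * Q" using card Q by (rule mult_right_mono)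
  finally have diff: "\<bar>\<Sum>p\<in>index_pairs n. f' p - f p\<bar> \<le> real n * real r * Q" .
  have "\<bar>x \<bullet> (K_hat d xi S' *\<^sub>v x) - x \<bullet> (K_hat d xi S *\<^sub>v x)\<bar> = pair_weight n * \<bar>\<Sum>p\<in>index_pairs n. f' p - f p\<bar>"
    unfolding K_hat_quadratic_form[OF S x] K_hat_quadratic_form[OF S' x] f_def f'_def
    using pair_weight_nonneg by (simp add: sum_subtractf abs_mult flip: right_diff_distrib)
  also have "\<dots> \<le> pair_weight n * (real n * real r * Q)" using diff pair_weight_nonneg by (rule mult_left_mono)
  also have "\<dots> = 2 * real r * G\<^sup>2 / (real n - 1) * (x \<bullet> x)" unfolding pair_weight_def Q_def using n by (simp add: field_simps)
  finally show ?thesis .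
qed

lemma K_hat_eig_nth_bounds:
  assumes S: "\<forall>x\<in>set S. x \<in> carrier_vec d" "length S = n"
    and G: "\<And>t. t \<in> carrier_vec d \<Longrightarrow> vnorm (gss xi t) \<le> G" and i: "1 \<le> i" "i \<le> d"
  shows "0 \<le> eig_nth (K_hat d xi S) i" "eig_nth (K_hat d xi S) i \<le> 4 * G\<^sup>2"
proof -
  obtain ps where es: "sorted_eigenbasis d (K_hat d xi S) ps (eigs_desc (K_hat d xi S))"
    using symmetric_mat_sorted_eigenbasis[OF K_hat_carrier K_hat_symmetric] by blast
  note es' = sorted_eigenbasisD[OF es]
  define p where "p = ps ! (i - 1)"
  have p: "p \<in> carrier_vec d" "p \<bullet> p = 1"
    using orthonormal_carrier[OF es'(3)] orthonormal_scalar_prod[OF es'(3)] es'(4) i unfolding p_def by auto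
  have "eig_nth (K_hat d xi S) i = p \<bullet> (K_hat d xi S *\<^sub>v p)"
    using sorted_eigenbasis_eigenvalue[OF es, of "i - 1"] i unfolding eig_nth_def p_def by simp
  then show "0 \<le> eig_nth (K_hat d xi S) i" "eig_nth (K_hat d xi S) i \<le> 4 * G\<^sup>2"
    using K_hat_quadratic_form_bounds[OF S G p(1)] p(2) by simp_all
qed

lemma K_hat_eig_gap_le:
  assumes S: "\<forall>x\<in>set S. x \<in> carrier_vec d" "length S = n"
    and G: "\<And>t. t \<in> carrier_vec d \<Longrightarrow> vnorm (gss xi t) \<le> G" and m: "1 \<le> m" "m < d"
  shows "eig_nth (K_hat d xi S) m - eig_nth (K_hat d xi S) (m + 1) \<le> 4 * G\<^sup>2"
  using K_hat_eig_nth_bounds[OF S G, of m] K_hat_eig_nth_bounds[OF S G, of "m + 1"] m by simp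

section \<open>Breakdown point\<close>

lemma contaminated_dataset:
  assumes "S' \<in> contaminated d S r" "\<forall>x\<in>set S. x \<in> carrier_vec d" "length S = n" "r \<le> n"
  shows "length S' = n" "\<forall>x\<in>set S'. x \<in> carrier_vec d" "\<And>i. i < n - r \<Longrightarrow> S' ! i = S ! i"
proof -
  obtain ys where ys: "S' = take (n - r) S @ ys" "length ys = r" "\<forall>y\<in>set ys. y \<in> carrier_vec d"
    using assms(1,3) unfolding contaminated_def by auto
  show "length S' = n" using ys assms(3,4) by simp
  show "\<forall>x\<in>set S'. x \<in> carrier_vec d" using ys assms(2) by (auto dest: in_set_takeD)
  show "\<And>i. i < n - r \<Longrightarrow> S' ! i = S ! i" using ys assms(3) by (simp add: nth_append)
qed

lemma bp_geI:
  assumes t: "t \<le> 1"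
    and bounded: "\<And>r. 1 \<le> r \<Longrightarrow> r \<le> length S \<Longrightarrow> real r / real (length S) < t \<Longrightarrow>
                    \<exists>B < pi / 2. \<forall>S' \<in> contaminated d S r. Theta (V S') (V S) \<le> B"
  shows "t \<le> bp d V S"
proof -
  define R where "R = {r \<in> {1..length S}. (SUP S'\<in>contaminated d S r. Theta (V S') (V S)) = pi / 2}"
  show ?thesis
  proof (cases "R = {}")
    case True
    then show ?thesis using t unfolding bp_def R_def Let_def by simp
  next
    case False
    define r where "r = Min R"
    have "r \<in> R" unfolding r_def R_def using False Min_in[of R] R_def by simp
    then have r: "1 \<le> r" "r \<le> length S" and sup: "(SUP S'\<in>contaminated d S r. Theta (V S') (V S)) = pi / 2"
      unfolding R_def by auto
    have "\<not> real r / real (length S) < t"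
    proof
      assume "real r / real (length S) < t"
      then obtain B where "B < pi / 2" "\<forall>S' \<in> contaminated d S r. Theta (V S') (V S) \<le> B"
        using bounded[OF r] by blast
      moreover have "contaminated d S r \<noteq> {}"
        unfolding contaminated_def by (auto intro!: exI[of _ "replicate r (0\<^sub>v d)"])
      ultimately have "(SUP S'\<in>contaminated d S r. Theta (V S') (V S)) \<le> B"
        by (intro cSUP_least) auto
      then show False using sup \<open>B < pi / 2\<close> by simp
    qed
    then show ?thesis using False unfolding bp_def R_def[symmetric] Let_def r_def by simp
  qed
qed

lemma Theta_contaminated_bounded:
  fixes d m n :: nat and xi :: "real \<Rightarrow> real" and S :: "real vec list"
    and V :: "real vec list \<Rightarrow> real mat"
  assumes G: "\<And>t. t \<in> carrier_vec d \<Longrightarrow> vnorm (gss xi t) \<le> G" "0 < G"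
    and m: "1 \<le> m" "m < d" and S: "length S = n" "\<forall>x\<in>set S. x \<in> carrier_vec d"
    and V: "\<And>S'. length S' = n \<Longrightarrow> (\<forall>x\<in>set S'. x \<in> carrier_vec d) \<Longrightarrow>
              top_eigvec_matrix m (K_hat d xi S') (V S')"
    and r: "1 \<le> r" "r \<le> n"
    and small: "real r / real n < (eig_nth (K_hat d xi S) m - eig_nth (K_hat d xi S) (m + 1)) / (8 * G\<^sup>2)"
  shows "\<exists>B < pi / 2. \<forall>S' \<in> contaminated d S r. Theta (V S') (V S) \<le> B"
proof -
  define K where "K = K_hat d xi S"
  have K: "K \<in> carrier_mat d d" "K\<^sup>T = K" unfolding K_def by (simp_all add: K_hat_carrier K_hat_symmetric)
  define gap where "gap = eig_nth K m - eig_nth K (m + 1)"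
  define e where "e = 2 * real r * G\<^sup>2 / (real n - 1)"
  have G2: "0 < G\<^sup>2" using G(2) by simp
  have "gap \<le> 4 * G\<^sup>2" using K_hat_eig_gap_le[OF S(2,1) G(1) m] unfolding gap_def K_def .
  then have "gap / (8 * G\<^sup>2) \<le> 1 / 2" using G2 by (simp add: field_simps)
  then have "real r / real n < 1 / 2" using small unfolding K_def[symmetric] gap_def[symmetric] by linarith
  then have n: "2 * real r < real n" using r by (simp add: field_simps)
  have "4 * real r * G\<^sup>2 * real n \<le> 4 * real r * G\<^sup>2 * (2 * (real n - 1))"
    using n r G2 by (intro mult_left_mono) auto
  then have "2 * e \<le> 8 * real r * G\<^sup>2 / real n" unfolding e_def using n r by (simp add: field_simps)
  also have "\<dots> < gap" using small n r G2 unfolding K_def[symmetric] gap_def[symmetric] by (simp add: field_simps)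
  finally have e: "0 \<le> e" "2 * e < gap" unfolding e_def using n r by simp_all
  have "eig_nth K m \<le> eig_nth K 1"
    using eig_nth_antimono[OF K, of 1 m] m by simp
  then have c: "0 < min 1 ((gap - 2 * e) / (eig_nth K 1 - eig_nth K (m + 1)))"
    using e unfolding gap_def by simp
  show ?thesis
  proof (intro exI conjI ballI)
    show "arccos (sqrt (min 1 ((gap - 2 * e) / (eig_nth K 1 - eig_nth K (m + 1))))) < pi / 2"
      using arccos_less_arccos[of 0] c by simp
    fix S' assume "S' \<in> contaminated d S r"
    note S' = contaminated_dataset[OF this S(2,1) r(2)]
    have pert: "\<bar>x \<bullet> (K_hat d xi S' *\<^sub>v x) - x \<bullet> (K *\<^sub>v x)\<bar> \<le> e * (x \<bullet> x)" if "x \<in> carrier_vec d" for x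
      using K_hat_quadratic_form_perturbation[OF S(2,1) S'(2,1) S'(3) _ G(1) that] n r
      unfolding e_def K_def by simp
    show "Theta (V S') (V S) \<le> arccos (sqrt (min 1 ((gap - 2 * e) / (eig_nth K 1 - eig_nth K (m + 1)))))"
      using Theta_top_eigvecs_perturbation[OF K K_hat_carrier K_hat_symmetric pert e(1) _ m(2)
          V[OF S, folded K_def] V[OF S'(1,2)]] e(2) m unfolding gap_def by simp
  qed
qed

theorem theorem10:
  fixes d m n :: nat and xi :: "real \<Rightarrow> real" and S :: "real vec list"
    and V :: "real vec list \<Rightarrow> real mat"
  assumes xi_pos: "\<And>r. r > 0 \<Longrightarrow> xi r > 0"
    and xi_bdd: "bdd_above (xi ` {0<..})"
    and m: "1 \<le> m" "m < d"
    and S: "length S = n" "\<forall>x\<in>set S. x \<in> carrier_vec d"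
    and V: "\<And>S'. length S' = n \<Longrightarrow> (\<forall>x\<in>set S'. x \<in> carrier_vec d) \<Longrightarrow>
              top_eigvec_matrix m (K_hat d xi S') (V S')"
  shows "bp d V S \<ge> (eig_nth (K_hat d xi S) m - eig_nth (K_hat d xi S) (m + 1))
                      / (8 * (gss_sup_norm d xi)\<^sup>2)"
proof (rule bp_geI)
  have d: "0 < d" using m by simp
  have G: "\<And>t. t \<in> carrier_vec d \<Longrightarrow> vnorm (gss xi t) \<le> gss_sup_norm d xi" "0 < gss_sup_norm d xi"
    using gss_sup_norm_bounds[OF xi_pos xi_bdd d] by auto
  have "eig_nth (K_hat d xi S) m - eig_nth (K_hat d xi S) (m + 1) \<le> 4 * (gss_sup_norm d xi)\<^sup>2"
    by (rule K_hat_eig_gap_le[OF S(2,1) G(1) m])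
  moreover have "0 < (gss_sup_norm d xi)\<^sup>2" using G(2) by simp
  ultimately show "(eig_nth (K_hat d xi S) m - eig_nth (K_hat d xi S) (m + 1)) / (8 * (gss_sup_norm d xi)\<^sup>2) \<le> 1"
    by (subst divide_le_eq_1_pos) linarith+
  fix r assume r: "1 \<le> r" "r \<le> length S"
    "real r / real (length S) < (eig_nth (K_hat d xi S) m - eig_nth (K_hat d xi S) (m + 1)) / (8 * (gss_sup_norm d xi)\<^sup>2)"
  show "\<exists>B < pi / 2. \<forall>S' \<in> contaminated d S r. Theta (V S') (V S) \<le> B"
    by (rule Theta_contaminated_bounded[OF G m S V]) (use r S(1) in simp_all)
qed

end
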